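(* Let $i\ge 3$ and $k\ge 3$ be integers. Then: (a) $g_2(L_i,L_{i+2},L_{i+k})=(3L_i-1)L_{i+2}-L_i$ whenever $k\ge i+4$; (b) $g_2(L_i,L_{i+2},L_{2i+3})=(L_i-1)L_{i+2}+L_{2i+3}-L_i$; (c) $g_2(L_i,L_{i+2},L_{2i+2})=(L_i-1)L_{i+2}+L_{2i+2}-L_i$ if $i$ is odd, and $g_2(L_i,L_{i+2},L_{2i+2})=(2L_i-1)L_{i+2}-L_i$ if $i$ is even; (d) $g_2(L_i,L_{i+2},L_{2i+1})=(2F_{i-1}-1)L_{i+2}+2L_{2i+1}-L_i$; (e) $g_2(L_3,L_5,L_6)=L_5+3L_6-L_3=61$; (f) if $r=\lfloor (L_i-1)/F_k\rfloor\ge 2$ (which holds exactly when $k\le i$ and $(i,k)\ne(3,3)$), then $$g_2(L_i,L_{i+2},L_{i+k})=\begin{cases}(L_i-rF_k-1)L_{i+2}+(r+2)L_{i+k}-L_i & \text{if } (L_i-rF_k)L_{i+2}\ge F_{k-2}L_i,\\ (F_k-1)L_{i+2}+(r+1)L_{i+k}-L_i & \text{if } (L_i-rF_k)L_{i+2}< F_{k-2}L_i.\end{cases}$$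
   Context: Fibonacci numbers: $F_0=0$, $F_1=1$, $F_n=F_{n-1}+F_{n-2}$. Lucas numbers: $L_0=2$, $L_1=1$, $L_n=L_{n-1}+L_{n-2}$. For positive integers $a_1,\dots,a_l$ with $\gcd(a_1,\dots,a_l)=1$ and an integer $n$, let $d(n;a_1,\dots,a_l)$ be the number of tuples $(x_1,\dots,x_l)$ of nonnegative integers with $a_1x_1+\dots+a_lx_l=n$. For a nonnegative integer $p$, the $p$-Frobenius number $g_p(a_1,\dots,a_l)$ is the largest integer $n$ with $d(n;a_1,\dots,a_l)\le p$. *)

theory Defs
  imports "HOL-Number_Theory.Fib"
begin

fun lucas :: "nat \<Rightarrow> nat" where
  "lucas 0 = 2"
| "lucas (Suc 0) = 1"
| "lucas (Suc (Suc n)) = lucas (Suc n) + lucas n"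

definition num_reps :: "int \<Rightarrow> nat list \<Rightarrow> nat" where
  "num_reps n as = card {xs :: nat list. length xs = length as \<and>
       int (\<Sum>j<length as. as ! j * xs ! j) = n}"

definition p_frobenius :: "nat \<Rightarrow> nat list \<Rightarrow> int" where
  "p_frobenius p as = (GREATEST n :: int. num_reps n as \<le> p)"

end

(* Write the three generators as a < b < c with c + t a = s b; for Lucas numbers this is the
   identity L(i+k) + F(k-2) L(i) = F(k) L(i+2). Then b y + c z = b (y + s z) (mod a), and as a and b
   are coprime, the representations of n correspond to the pairs (y, z) in one residue class of
   y + s z modulo a whose weight b y + c z is at most n. Hence g_2 = C - a as soon as every class
   contains three pairs of weight at most C, while in the class of C - a only two pairs have weight
   at most C - a. In each family of generators explicit pairs give the first condition, and an
   identity b (rho0 + a J) = C + t a Z locates the exceptional class rho0 and rules out all pairs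
   of it beyond two. *)

theory Submission
  imports Defs "HOL-Number_Theory.Cong"
begin

section \<open>Lucas and Fibonacci identities\<close>

lemma lucas_Suc_eq_fib: "lucas (Suc n) = fib n + fib (Suc (Suc n))"
proof -
  have "lucas (Suc n) = fib n + fib (Suc (Suc n)) \<and>
        lucas (Suc (Suc n)) = fib (Suc n) + fib (Suc (Suc (Suc n)))"
    by (induction n) auto
  then show ?thesis ..
qed

lemma lucas_pos: "lucas n > 0"
  by (induction n rule: lucas.induct) simp_all

lemma lucas_add_fib: "lucas (i + k + 2) + fib k * lucas i = fib (k + 2) * lucas (i + 2)"
proof (induction k rule: fib.induct)
  case (3 n)
  have "lucas (i + Suc (Suc n) + 2) = lucas (i + Suc n + 2) + lucas (i + n + 2)"
    "fib (Suc (Suc n) + 2) = fib (Suc n + 2) + fib (n + 2)"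
    by (simp_all add: numeral_eq_Suc)
  with 3 show ?case by (simp only: fib.simps(3)) (simp add: algebra_simps)
qed (simp_all add: numeral_eq_Suc)

lemma lucas_add_fib':
  assumes "k \<ge> 2" shows "lucas (i + k) + fib (k - 2) * lucas i = fib k * lucas (i + 2)"
proof -
  have "i + (k - 2) + 2 = i + k" "k - 2 + 2 = k" using assms by simp_all
  then show ?thesis using lucas_add_fib[of i "k - 2"] by simp
qed

lemma coprime_lucas_Suc: "coprime (lucas n) (lucas (Suc n))"
proof (induction n)
  case (Suc n)
  then show ?case by (simp add: coprime_iff_gcd_eq_1 gcd.commute[of "lucas (Suc n)"])
qed simp

lemma coprime_lucas_add2: "coprime (lucas n) (lucas (n + 2))"
proof -
  have "gcd (lucas n) (lucas (n + 2)) = gcd (lucas n) (lucas (Suc n))"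
    by (simp add: numeral_eq_Suc) (metis gcd_add2 add.commute)
  then show ?thesis using coprime_lucas_Suc[of n] by (simp add: coprime_iff_gcd_eq_1)
qed

lemma fib_Cassini_int':
  "int (fib (j + 1))^2 - int (fib (j + 1)) * int (fib j) - int (fib j)^2 = (-1)^j"
  using fib_Cassini_int[of j] by (simp add: algebra_simps power2_eq_square)

lemma lucas_fib_near:
  assumes "i \<ge> 3"
  obtains A B where "A \<le> B" "1 \<le> B" "B \<le> 2*A + 1"
    "lucas i = 3*A + 4*B" "lucas (i+2) = 7*A + 11*B"
    "fib (i-3) = A" "fib (i-2) = B" "fib (i-1) = A + B" "fib i = A + 2*B" "fib (i+1) = 2*A + 3*B"
    "fib (i+2) = 3*A + 5*B" "fib (i+3) = 5*A + 8*B" "fib (i+4) = 8*A + 13*B"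
    "fib (i+5) = 13*A + 21*B" "i = 3 \<longleftrightarrow> A = 0"
proof -
  obtain j where ij: "i = j + 3" using assms by (metis add.commute le_Suc_ex)
  define A where "A = fib j"
  define B where "B = fib (j + 1)"
  have fib_j: "fib (j+2) = A + B" "fib (j+3) = A + 2*B" "fib (j+4) = 2*A + 3*B"
    "fib (j+5) = 3*A + 5*B" "fib (j+6) = 5*A + 8*B" "fib (j+7) = 8*A + 13*B"
    "fib (j+8) = 13*A + 21*B"
    unfolding A_def B_def by (simp_all add: numeral_eq_Suc)
  have "lucas (j+3) = fib (j+2) + fib (j+4)" "lucas (j+5) = fib (j+4) + fib (j+6)"
    using lucas_Suc_eq_fib[of "j+2"] lucas_Suc_eq_fib[of "j+4"] by (simp_all add: numeral_eq_Suc)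
  then have lucas_j: "lucas (j+3) = 3*A + 4*B" "lucas (j+5) = 7*A + 11*B"
    by (simp_all only: fib_j)
  have AB: "A \<le> B" unfolding A_def B_def by (rule fib_mono) simp
  have B1: "1 \<le> B" unfolding B_def using fib_neq_0_nat[of "j+1"] by simp
  have B2A: "B \<le> 2*A + 1"
  proof (cases j)
    case (Suc n)
    have "fib n \<le> fib (n+1)" by (rule fib_mono) simp
    with Suc show ?thesis unfolding A_def B_def by (simp add: numeral_eq_Suc)
  qed (simp add: A_def B_def)
  have A0: "i = 3 \<longleftrightarrow> A = 0" unfolding A_def using ij fib_neq_0_nat[of j] by (cases j) auto
  have idx: "j+3-3 = j" "j+3-2 = j+1" "j+3-1 = j+2" "j+3+1 = j+4" "j+3+2 = j+5"
    "j+3+3 = j+6" "j+3+4 = j+7" "j+3+5 = j+8"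
    by simp_all
  show ?thesis
    using that[OF AB B1 B2A _ _ _ _ _ _ _ _ _ _ _ A0] unfolding ij
    by (simp_all only: idx fib_j lucas_j A_def[symmetric] B_def[symmetric])
qed

section \<open>Representations counted by residue classes\<close>

definition reps3 :: "nat \<Rightarrow> nat \<Rightarrow> nat \<Rightarrow> int \<Rightarrow> (nat \<times> nat \<times> nat) set" where
  "reps3 a b c n = {(x, y, z). int (a*x + b*y + c*z) = n}"

lemma num_reps_three: "num_reps n [a, b, c] = card (reps3 a b c n)"
proof -
  have sum3: "(\<Sum>j<length [a,b,c]. [a,b,c] ! j * [x,y,z] ! j) = a*x + b*y + c*z" for x y z
    by (simp add: numeral_3_eq_3 lessThan_Suc)
  have "{xs. length xs = length [a,b,c] \<and> int (\<Sum>j<length [a,b,c]. [a,b,c] ! j * xs ! j) = n}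
      = (\<lambda>(x, y, z). [x, y, z]) ` reps3 a b c n"
  proof (intro set_eqI iffI)
    fix xs assume "xs \<in> {xs. length xs = length [a,b,c] \<and>
        int (\<Sum>j<length [a,b,c]. [a,b,c] ! j * xs ! j) = n}"
    moreover from this obtain x y z where "xs = [x, y, z]"
      by (auto simp: numeral_3_eq_3 length_Suc_conv)
    ultimately show "xs \<in> (\<lambda>(x, y, z). [x, y, z]) ` reps3 a b c n"
      by (auto simp: reps3_def image_iff sum3)
  qed (auto simp: reps3_def sum3)
  moreover have "inj_on (\<lambda>(x, y, z). [x, y, z]) (reps3 a b c n)"
    by (auto simp: inj_on_def)
  ultimately show ?thesis unfolding num_reps_def by (simp add: card_image)
qed

lemma finite_reps3:
  assumes "a > 0" "b > 0" "c > 0" shows "finite (reps3 a b c n)"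
proof (rule finite_subset)
  show "reps3 a b c n \<subseteq> {..nat n} \<times> {..nat n} \<times> {..nat n}"
  proof (rule subrelI)
    fix x yz assume "(x, yz) \<in> reps3 a b c n"
    then obtain y z where yz: "yz = (y, z)" and "int (a*x + b*y + c*z) = n"
      by (auto simp: reps3_def)
    then have "nat n = a*x + b*y + c*z" by (metis nat_int)
    moreover have "x \<le> a*x" "y \<le> b*y" "z \<le> c*z" using assms by auto
    ultimately have "x \<le> nat n" "y \<le> nat n" "z \<le> nat n" by linarith+
    then show "(x, yz) \<in> {..nat n} \<times> {..nat n} \<times> {..nat n}" using yz by simp
  qed
qed simp

lemma inj_on_snd_reps3: assumes "a > 0" shows "inj_on snd (reps3 a b c n)"
  using assms by (auto simp: inj_on_def reps3_def)

lemma p_frobenius_eqI: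
  assumes "num_reps G as \<le> p" "\<And>n. n > G \<Longrightarrow> num_reps n as > p"
  shows "p_frobenius p as = G"
  unfolding p_frobenius_def
proof (rule Greatest_equality)
  fix m assume "num_reps m as \<le> p"
  then show "m \<le> G" using assms(2)[of m] by (cases "m > G") auto
qed (rule assms(1))

definition class_pairs :: "nat \<Rightarrow> nat \<Rightarrow> nat \<Rightarrow> nat \<Rightarrow> nat \<Rightarrow> nat \<Rightarrow> (nat \<times> nat) set" where
  "class_pairs a b c s M \<rho> = {(y, z). (y + s*z) mod a = \<rho> \<and> b*y + c*z \<le> M}"

lemma int_eq_diff_of_add_eq:
  fixes a b c s t :: nat
  assumes "c + t*a = s*b" shows "int c = int s * int b - int t * int a"
proof -
  have "int (c + t*a) = int (s*b)" using assms by simp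
  then show ?thesis by simp
qed

lemma weight_add_eq:
  fixes a b c s t y z :: nat
  assumes "c + t*a = s*b" shows "b*y + c*z + t*a*z = b*(y + s*z)"
proof -
  have "b*(y + s*z) = b*y + (s*b)*z" by (simp add: algebra_simps)
  also have "\<dots> = b*y + (c + t*a)*z" by (simp only: assms)
  finally show ?thesis by (simp add: algebra_simps)
qed

lemma weight_mod_eq:
  fixes a b c s t y z :: nat
  assumes "c + t*a = s*b" shows "(b*y + c*z) mod a = (b*(y + s*z)) mod a"
proof -
  have "b*(y + s*z) = (b*y + c*z) + a*(t*z)"
    using weight_add_eq[OF assms, of y z] by (simp add: algebra_simps)
  then show ?thesis by simp
qed

lemma class_weight_le:
  fixes a b c s t y z :: nat
  assumes "c + t*a = s*b" shows "(y + s*z)*c \<le> s*(b*y + c*z)"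
proof -
  have "s*(b*y + c*z) = y*(s*b) + s*c*z" by (simp add: algebra_simps)
  also have "\<dots> = (y + s*z)*c + y*(t*a)" unfolding assms[symmetric] by (simp add: algebra_simps)
  finally show ?thesis by simp
qed

lemma weight_ge_of_class_eq:
  fixes a b c s t y z C Z :: nat
  assumes "c + t*a = s*b" "b*(y + s*z) = C + t*a*Z" "z \<le> Z"
  shows "C \<le> b*y + c*z"
proof -
  have "t*a*z \<le> t*a*Z" using assms(3) by simp
  then show ?thesis using weight_add_eq[OF assms(1), of y z] assms(2) by linarith
qed

lemma weight_gt_of_class_ge:
  fixes a b c s t y z G M :: nat
  assumes "c + t*a = s*b" "M \<le> y + s*z" "s*G < M*c"
  shows "G < b*y + c*z"
proof -
  have "M*c \<le> (y + s*z)*c" using assms(2) by simp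
  then have "s*G < s*(b*y + c*z)" using class_weight_le[OF assms(1), of y z] assms(3) by linarith
  then show ?thesis by simp
qed

lemma le_of_add_mult_less:
  fixes s y z M Z :: nat
  assumes "y + s*z = M" "M < (Z + 1)*s" shows "z \<le> Z"
proof -
  have "s*z < s*(Z + 1)" using assms by (simp add: algebra_simps)
  then have "z < Z + 1" using mult_less_cancel1 by blast
  then show ?thesis by simp
qed

lemma class_of_rep:
  fixes a b c s t \<rho> N x y z :: nat
  assumes "coprime a b" "c + t*a = s*b" "\<rho> < a" "(b*\<rho>) mod a = N mod a"
    and "a*x + b*y + c*z = N"
  shows "(y + s*z) mod a = \<rho>"
proof -
  have "(b*(y + s*z)) mod a = N mod a"
    using weight_mod_eq[OF assms(2)] assms(5) by (metis add.assoc mod_mult_self4)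
  then have "[b*(y + s*z) = b*\<rho>] (mod a)" using assms(4) by (simp add: cong_def)
  then have "[y + s*z = \<rho>] (mod a)"
    using assms(1) by (simp add: cong_mult_lcancel_nat coprime_commute)
  then show ?thesis using assms(3) by (simp add: cong_def)
qed

lemma class_pairs_subset_reps:
  fixes a b c s t \<rho> N C :: nat
  assumes "a > 0" "c + t*a = s*b" "(b*\<rho>) mod a = N mod a" "C < N + a"
  shows "class_pairs a b c s C \<rho> \<subseteq> snd ` reps3 a b c (int N)"
proof (rule subrelI)
  fix y z assume "(y, z) \<in> class_pairs a b c s C \<rho>"
  then have cls: "(y + s*z) mod a = \<rho>" and w: "b*y + c*z < N + a"
    using assms(4) by (auto simp: class_pairs_def)
  have m: "(b*y + c*z) mod a = N mod a"
    using weight_mod_eq[OF assms(2)] assms(3) cls by (metis mod_mult_right_eq)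
  have le: "b*y + c*z \<le> N"
  proof (rule ccontr)
    assume "\<not> ?thesis"
    with m have "a dvd (b*y + c*z) - N" "0 < (b*y + c*z) - N" "(b*y + c*z) - N < a"
      using w by (auto simp: mod_eq_dvd_iff_nat)
    then show False by (meson nat_dvd_not_less)
  qed
  with m have "a dvd N - (b*y + c*z)" by (metis mod_eq_dvd_iff_nat)
  then obtain x where "N - (b*y + c*z) = a*x" ..
  with le have "int (a*x + b*y + c*z) = int N" by (intro arg_cong[of _ _ int]) linarith
  then have "(x, y, z) \<in> reps3 a b c (int N)" unfolding reps3_def by (simp only: mem_Collect_eq prod.case)
  then show "(y, z) \<in> snd ` reps3 a b c (int N)" by force
qed

lemma ex_residue_mult_mod_eq:
  fixes a b N :: nat
  assumes "a > 0" "coprime a b"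
  obtains \<rho> where "\<rho> < a" "(b*\<rho>) mod a = N mod a"
proof -
  obtain u where u: "[b*u = 1] (mod a)"
    using cong_solve_coprime_nat[of b a] assms(2) by (auto simp: coprime_commute)
  have "[b*((u*N) mod a) = b*(u*N)] (mod a)" by (simp add: cong_def mod_mult_right_eq)
  also have "[b*(u*N) = 1*N] (mod a)" using cong_mult[OF u cong_refl[of N]] by (simp add: mult.assoc)
  finally show ?thesis using that[of "(u*N) mod a"] assms(1) by (simp add: cong_def)
qed

lemma three_le_num_reps:
  fixes a b c s t C :: nat
  assumes pos: "a > 0" "b > 0" "c > 0" and "coprime a b" and rel: "c + t*a = s*b"
    and cover: "\<And>\<rho>. \<rho> < a \<Longrightarrow> 3 \<le> card (class_pairs a b c s C \<rho>)"
    and "a \<le> C" "n > int C - int a"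
  shows "3 \<le> num_reps n [a, b, c]"
proof -
  define N where "N = nat n"
  have n: "n = int N" and CN: "C < N + a" using assms(7,8) unfolding N_def by linarith+
  obtain \<rho> where \<rho>: "\<rho> < a" "(b*\<rho>) mod a = N mod a"
    using ex_residue_mult_mod_eq[OF pos(1) assms(4)] by blast
  have "3 \<le> card (class_pairs a b c s C \<rho>)" by (rule cover[OF \<rho>(1)])
  also have "\<dots> \<le> card (snd ` reps3 a b c n)"
    unfolding n using class_pairs_subset_reps[OF pos(1) rel \<rho>(2) CN]
    by (rule card_mono[rotated]) (intro finite_imageI finite_reps3 pos)
  also have "\<dots> \<le> card (reps3 a b c n)" by (rule card_image_le) (intro finite_reps3 pos)
  finally show ?thesis by (simp add: num_reps_three)
qed

lemma num_reps_le_2: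
  assumes "a > 0"
    and "\<And>x y z. int (a*x + b*y + c*z) = n \<Longrightarrow> (y, z) \<in> {P, Q}"
  shows "num_reps n [a, b, c] \<le> 2"
proof -
  have "card (reps3 a b c n) = card (snd ` reps3 a b c n)"
    using inj_on_snd_reps3[OF assms(1)] by (simp add: card_image)
  also have "\<dots> \<le> card {P, Q}"
  proof (rule card_mono)
    show "snd ` reps3 a b c n \<subseteq> {P, Q}"
    proof
      fix q assume "q \<in> snd ` reps3 a b c n"
      then obtain x y z where "q = (y, z)" "(x, y, z) \<in> reps3 a b c n" by force
      moreover from this have "int (a*x + b*y + c*z) = n" unfolding reps3_def by simp
      ultimately show "q \<in> {P, Q}" using assms(2) by blast
    qed
  qed simp
  also have "\<dots> \<le> 2" by (simp add: card_insert_if)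
  finally show ?thesis by (simp add: num_reps_three)
qed

lemma p_frobenius_2_eqI:
  fixes a b c s t C \<rho>0 J Z :: nat
  assumes pos: "a > 0" "b > 0" "c > 0" and cop: "coprime a b" and rel: "c + t*a = s*b"
    and "a \<le> C" and "\<rho>0 < a" and iden: "b*(\<rho>0 + a*J) = C + t*a*Z"
    and cover: "\<And>\<rho>. \<rho> < a \<Longrightarrow> 3 \<le> card (class_pairs a b c s C \<rho>)"
    and exceptional: "\<And>x y z j. a*x + b*y + c*z = C - a \<Longrightarrow> y + s*z = \<rho>0 + a*j \<Longrightarrow>
      (y, z) \<in> {P, Q}"
  shows "p_frobenius 2 [a, b, c] = int C - int a"
proof (rule p_frobenius_eqI)
  have "(b*\<rho>0) mod a = (b*\<rho>0 + a*(b*J)) mod a" by simp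
  also have "b*\<rho>0 + a*(b*J) = (C - a) + a*(t*Z + 1)"
    using iden \<open>a \<le> C\<close> by (simp add: algebra_simps)
  also have "((C - a) + a*(t*Z + 1)) mod a = (C - a) mod a" by (rule mod_mult_self2)
  finally have res: "(b*\<rho>0) mod a = (C - a) mod a" .
  show "num_reps (int C - int a) [a, b, c] \<le> 2"
  proof (rule num_reps_le_2[OF pos(1)])
    fix x y z assume "int (a*x + b*y + c*z) = int C - int a"
    then have e: "a*x + b*y + c*z = C - a" using \<open>a \<le> C\<close> by linarith
    then have "(y + s*z) mod a = \<rho>0" using class_of_rep[OF cop rel \<open>\<rho>0 < a\<close> res] by blast
    then have "y + s*z = \<rho>0 + a*((y + s*z) div a)" by (metis mod_mult_div_eq add.commute)
    then show "(y, z) \<in> {P, Q}" using exceptional[OF e] by blast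
  qed
next
  fix n assume "n > int C - int a"
  then have "3 \<le> num_reps n [a, b, c]"
    by (intro three_le_num_reps[OF pos cop rel _ \<open>a \<le> C\<close>] cover)
  then show "num_reps n [a, b, c] > 2" by simp
qed

lemma three_le_card_class_pairs:
  fixes a b c s \<rho> M ya za yb zb yc zc ja jb jc :: nat
  assumes "b > 0" "c > 0" "\<rho> < a"
    and "(ya, za) \<noteq> (yb, zb)" "(ya, za) \<noteq> (yc, zc)" "(yb, zb) \<noteq> (yc, zc)"
    and "ya + s*za = \<rho> + a*ja" "yb + s*zb = \<rho> + a*jb" "yc + s*zc = \<rho> + a*jc"
    and "b*ya + c*za \<le> M" "b*yb + c*zb \<le> M" "b*yc + c*zc \<le> M"
  shows "3 \<le> card (class_pairs a b c s M \<rho>)"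
proof -
  have "class_pairs a b c s M \<rho> \<subseteq> {..M} \<times> {..M}"
  proof (rule subrelI)
    fix y z assume "(y, z) \<in> class_pairs a b c s M \<rho>"
    then have "b*y + c*z \<le> M" by (simp add: class_pairs_def)
    moreover have "y \<le> b*y" "z \<le> c*z" using assms(1,2) by simp_all
    ultimately have "y \<le> M" "z \<le> M" by linarith+
    then show "(y, z) \<in> {..M} \<times> {..M}" by simp
  qed
  then have "finite (class_pairs a b c s M \<rho>)" by (rule finite_subset) simp
  moreover have "{(ya, za), (yb, zb), (yc, zc)} \<subseteq> class_pairs a b c s M \<rho>"
    using assms(3,7-12) by (auto simp: class_pairs_def)
  ultimately have "card {(ya, za), (yb, zb), (yc, zc)} \<le> card (class_pairs a b c s M \<rho>)"
    by (rule card_mono)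
  then show ?thesis using assms(4-6) by simp
qed

text \<open>In layer J with z \<le> Z the identity forces the weight b y + c z up to C, and in higher
  layers the bound on c forces it above C - a.\<close>
lemma rep_layer_bound:
  fixes a b c s t x y z j C \<rho>0 J Z :: nat
  assumes rel: "c + t*a = s*b" and "0 < a" "a \<le> C"
    and iden: "b*(\<rho>0 + a*J) = C + t*a*Z" and big: "s*(C - a) < (\<rho>0 + a*(J + 1))*c"
    and e: "a*x + b*y + c*z = C - a" and m: "y + s*z = \<rho>0 + a*j"
  shows "j < J \<or> (j = J \<and> Z < z)"
proof -
  have w: "b*y + c*z \<le> C - a" using e by linarith
  have "\<not> (j = J \<and> z \<le> Z)"
  proof
    assume "j = J \<and> z \<le> Z"
    then have "C \<le> b*y + c*z" using weight_ge_of_class_eq[OF rel _, of y z C Z] iden m by simp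
    then show False using w \<open>0 < a\<close> \<open>a \<le> C\<close> by linarith
  qed
  moreover have "\<not> j > J"
  proof
    assume "j > J"
    then have "a*(J + 1) \<le> a*j" by (intro mult_le_mono2) simp
    then have "\<rho>0 + a*(J + 1) \<le> y + s*z" using m by linarith
    then have "C - a < b*y + c*z" using weight_gt_of_class_ge[OF rel _ big] by blast
    then show False using w by linarith
  qed
  ultimately show ?thesis by linarith
qed

section \<open>Five families of generators\<close>

lemma large_c_exceptional_pairs:
  fixes a b c s t x y z j :: nat
  assumes a0: "a \<ge> 1" and ba: "2*a \<le> b" and rel: "c + t*a = s*b" and sa: "3*a \<le> s"
    and c2: "3*(a*b) \<le> 2*c" and alt: "t \<le> b \<or> 3*(a*b) \<le> c"
    and e: "a*x + b*y + c*z = (3*a - 1)*b - a" and m: "y + s*z = (a - 1) + a*j"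
  shows "(y, z) \<in> {(a - 1, 0), (2*a - 1, 0)}"
proof -
  have "b \<le> (3*a - 1)*b" using a0 mult_le_mono1[of 1 "3*a - 1" b] by linarith
  then have "a \<le> (3*a - 1)*b" using ba by linarith
  then have eI: "int a * int x + int b * int y + int c * int z = 3 * int a * int b - int b - int a"
    using arg_cong[OF e, of int] a0 by (simp add: of_nat_diff algebra_simps)
  have "b*y + c*z + t*a*z = b*(y + s*z)" by (rule weight_add_eq[OF rel])
  then have bzI: "int b * int y + int c * int z + int t * int a * int z = int b * int (y + s*z)"
    by (metis of_nat_add of_nat_mult)
  have nn: "0 \<le> int a * int x" "0 \<le> int b * int y" "1 \<le> int a" "0 \<le> int c * int z"
    using a0 by simp_all
  consider "z = 0" | "z = 1" | "z \<ge> 2" by linarith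
  then show ?thesis
  proof cases
    case 1
    then have ym: "y = a - 1 + a*j" using m by simp
    have "j \<le> 1"
    proof (rule ccontr)
      assume "\<not> j \<le> 1"
      then have "int a * 2 \<le> int a * int j" by (intro mult_left_mono) simp_all
      moreover have "int y = int a - 1 + int a * int j" using ym a0 by simp
      ultimately have "int b * (3*int a - 1) \<le> int b * int y" by (intro mult_left_mono) simp_all
      then show False using eI 1 by (simp add: algebra_simps) (use nn in linarith)
    qed
    then consider "j = 0" | "j = 1" by linarith
    then show ?thesis using ym 1 a0 by cases auto
  next
    case 2
    show ?thesis using alt
    proof
      assume "3*(a*b) \<le> c"
      then have "3 * (int a * int b) \<le> int c" by (metis of_nat_le_iff of_nat_mult of_nat_numeral)
      then show ?thesis using eI 2 by (simp add: algebra_simps) (use nn in linarith)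
    next
      assume tb: "t \<le> b"
      have "j \<ge> 3"
      proof (rule ccontr)
        assume "\<not> j \<ge> 3"
        then have "a*j \<le> a*2" by simp
        moreover have "y + s = a - 1 + a*j" using m 2 by simp
        ultimately show False using sa a0 by linarith
      qed
      then have "int a * 3 \<le> int a * int j" by (intro mult_left_mono) simp_all
      moreover have "int (y + s*z) = int a - 1 + int a * int j" using m a0 by simp
      ultimately have "int b * (4*int a - 1) \<le> int b * int (y + s*z)"
        by (intro mult_left_mono) simp_all
      moreover have "int t * int a \<le> int b * int a" using tb by (intro mult_right_mono) simp_all
      ultimately show ?thesis using eI bzI 2 by (simp add: algebra_simps) (use nn in linarith)
    qed
  next
    case 3
    have "int c * 2 \<le> int c * int z" using 3 by (intro mult_left_mono) simp_all
    moreover have "3 * (int a * int b) \<le> 2 * int c"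
      using c2 by (metis of_nat_le_iff of_nat_mult of_nat_numeral)
    ultimately show ?thesis using eI by (simp add: algebra_simps) (use nn in linarith)
  qed
qed

lemma p_frobenius_2_large_c:
  fixes a b c s t :: nat
  assumes a0: "a \<ge> 1" and ba: "2*a \<le> b" and rel: "c + t*a = s*b" and cop: "coprime a b"
    and sa: "3*a \<le> s" and c2: "3*(a*b) \<le> 2*c" and alt: "t \<le> b \<or> 3*(a*b) \<le> c"
  shows "p_frobenius 2 [a, b, c] = int ((3*a - 1)*b) - int a"
proof -
  define C where "C = (3*a - 1)*b"
  have b0: "b > 0" using ba a0 by linarith
  have "a*b > 0" using a0 b0 by simp
  then have c0: "c > 0" using c2 by linarith
  have "b \<le> (3*a - 1)*b" using a0 mult_le_mono1[of 1 "3*a - 1" b] by linarith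
  then have Ca: "a \<le> C" unfolding C_def using ba by linarith
  have iden: "b*(a - 1 + a*2) = C + t*a*0" unfolding C_def using a0 by (simp add: algebra_simps)
  show ?thesis unfolding C_def[symmetric]
  proof (rule p_frobenius_2_eqI[OF _ b0 c0 cop rel Ca _ iden])
    fix \<rho> assume \<rho>a: "\<rho> < a"
    have "b*(\<rho> + 2*a) \<le> b*(3*a - 1)" using \<rho>a by (intro mult_le_mono2) linarith
    then have "b*\<rho> + c*0 \<le> C" "b*(\<rho> + a) + c*0 \<le> C" "b*(\<rho> + 2*a) + c*0 \<le> C"
      unfolding C_def by (simp_all add: algebra_simps)
    then show "3 \<le> card (class_pairs a b c s C \<rho>)"
      by (intro three_le_card_class_pairs[where ya=\<rho> and za=0 and yb="\<rho>+a" and zb=0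
          and yc="\<rho>+2*a" and zc=0 and ja=0 and jb=1 and jc=2])
        (use b0 c0 \<rho>a a0 in simp_all)
  next
    fix x y z j assume "a*x + b*y + c*z = C - a" and "y + s*z = (a - 1) + a*j"
    then show "(y, z) \<in> {(a - 1, 0), (2*a - 1, 0)}"
      unfolding C_def by (rule large_c_exceptional_pairs[OF a0 ba rel sa c2 alt])
  qed (use a0 in simp_all)
qed

lemma class_pairs_s_below_2a:
  fixes a b c s t e C \<rho> :: nat
  assumes se: "s + e = 2*a" and ea: "e < a" and te: "t + e \<le> a" and ba: "a \<le> b"
    and rel: "c + t*a = s*b" and C: "C = (a - 1)*b + c" and \<rho>a: "\<rho> < a"
    and pos: "b > 0" "c > 0"
  shows "3 \<le> card (class_pairs a b c s C \<rho>)"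
proof -
  have cI: "int c = int s * int b - int t * int a" by (rule int_eq_diff_of_add_eq[OF rel])
  have sI: "int s = 2 * int a - int e" using se by linarith
  have CI: "int C = (int a - 1) * int b + int c" unfolding C using \<rho>a by (simp add: of_nat_diff)
  have k2: "int t * int a \<le> int t * int b" using ba by (intro mult_left_mono) simp_all
  have k5: "int t * int b \<le> int a * int b" using te by (intro mult_right_mono) simp_all
  show ?thesis
  proof (cases "\<rho> + e < a")
    case True
    have v2: "b*(\<rho> + a) + c*0 \<le> C"
    proof (rule zle_int[THEN iffD1])
      have "int b * (int \<rho> + int a) \<le> int b * (2*int a - int e - 1)"
        using True by (intro mult_left_mono) simp_all
      then show "int (b*(\<rho> + a) + c*0) \<le> int C"
        using k2 k5 unfolding CI cI sI by (simp add: algebra_simps)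
    qed
    have v3: "b*(\<rho> + e) + c*1 \<le> C"
    proof (rule zle_int[THEN iffD1])
      have "int b * (int \<rho> + int e) \<le> int b * (int a - 1)" using True by (intro mult_left_mono) simp_all
      then show "int (b*(\<rho> + e) + c*1) \<le> int C" unfolding CI by (simp add: algebra_simps)
    qed
    have v1: "b*\<rho> + c*0 \<le> C" using v2 by (simp add: algebra_simps)
    show ?thesis
      by (rule three_le_card_class_pairs[where ya=\<rho> and za=0 and yb="\<rho>+a" and zb=0
          and yc="\<rho>+e" and zc=1 and ja=0 and jb=1 and jc=2])
        (use v1 v2 v3 se \<rho>a pos in simp_all)
  next
    case False
    have v3: "b*(\<rho> + a) + c*0 \<le> C"
    proof (rule zle_int[THEN iffD1])
      have "int b * (int \<rho> + int a) \<le> int b * (2*int a - 1)" using \<rho>a by (intro mult_left_mono) simp_all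
      moreover have "int t * int b \<le> (int a - int e) * int b" using te by (intro mult_right_mono) simp_all
      ultimately show "int (b*(\<rho> + a) + c*0) \<le> int C"
        using k2 unfolding CI cI sI by (simp add: algebra_simps)
    qed
    have v1: "b*\<rho> + c*0 \<le> C" using v3 by (simp add: algebra_simps)
    have v2: "b*(\<rho> + e - a) + c*1 \<le> C"
    proof (rule zle_int[THEN iffD1])
      have d: "int (\<rho> + e - a) = int \<rho> + int e - int a" using False by (simp add: of_nat_diff)
      have "int b * (int \<rho> + int e - int a) \<le> int b * (int a - 1)"
        using \<rho>a ea by (intro mult_left_mono) simp_all
      then show "int (b*(\<rho> + e - a) + c*1) \<le> int C"
        unfolding CI of_nat_add of_nat_mult d by (simp add: algebra_simps)
    qed
    show ?thesis
      by (rule three_le_card_class_pairs[where ya=\<rho> and za=0 and yb="\<rho>+e-a" and zb=1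
          and yc="\<rho>+a" and zc=0 and ja=0 and jb=1 and jc=1])
        (use v1 v2 v3 se False \<rho>a pos in simp_all)
  qed
qed

lemma p_frobenius_2_s_below_2a:
  fixes a b c s t e :: nat
  assumes se: "s + e = 2*a" and ea: "e < a" and te: "t + e \<le> a" and bt: "2*t \<le> b"
    and ba: "a \<le> b" and rel: "c + t*a = s*b" and cop: "coprime a b" and t1: "t \<ge> 1"
  shows "p_frobenius 2 [a, b, c] = int ((a - 1)*b + c) - int a"
proof -
  define C where "C = (a - 1)*b + c"
  have a0: "a > 0" and b0: "b > 0" using ea ba by simp_all
  have cI: "int c = int s * int b - int t * int a" by (rule int_eq_diff_of_add_eq[OF rel])
  have sI: "int s = 2 * int a - int e" using se by linarith
  have "int t * int a \<le> int t * int b" using ba by (intro mult_left_mono) simp_all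
  moreover have "int t * int b \<le> (int a - int e) * int b" using te by (intro mult_right_mono) simp_all
  ultimately have cab: "int a * int b \<le> int c" unfolding cI sI by (simp add: algebra_simps)
  moreover have "int a \<le> int a * int b" using mult_left_mono[of 1 "int b" "int a"] b0 by simp
  ultimately have c0: "c > 0" using a0 by linarith
  have CI: "int C = (int a - 1) * int b + int c" unfolding C_def using a0 by (simp add: of_nat_diff)
  have "0 \<le> (int a - 1) * int b" using a0 by simp
  then have Ca: "a \<le> C" using cab \<open>int a \<le> int a * int b\<close> CI by linarith
  have GI: "int (C - a) = (int a - 1) * int b + int c - int a" using Ca CI by (simp add: of_nat_diff)
  have iden: "b*(a - e - 1 + a*2) = C + t*a*1"
  proof -
    have "int (b*(a - e - 1 + a*2)) = int (C + t*a*1)"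
      unfolding of_nat_add of_nat_mult CI using ea by (simp add: of_nat_diff cI sI algebra_simps)
    then show ?thesis by (simp only: of_nat_eq_iff)
  qed
  have big: "s*(C - a) < (a - e - 1 + a*(2 + 1))*c"
  proof -
    have k3: "int s * (int t + 1) \<le> int s * (int b - int t + 1)" using bt by (intro mult_left_mono) simp_all
    have k4: "int e * (int t + 1) \<le> int s * (int t + 1)" using sI ea by (intro mult_right_mono) simp_all
    have "int e * (int t + 1) = int t * int e + int e" by (simp add: algebra_simps)
    then have "0 < int s * (int b - int t + 1) - int t * int e + int t" using k3 k4 t1 by linarith
    then have "0 < int a * (int s * (int b - int t + 1) - int t * int e + int t)" using a0 by simp
    also have "\<dots> = int ((a - e - 1 + a*(2 + 1))*c) - int (s*(C - a))"
      unfolding of_nat_mult GI using ea by (simp add: of_nat_diff cI sI algebra_simps)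
    finally show ?thesis by linarith
  qed
  show ?thesis unfolding C_def[symmetric]
  proof (rule p_frobenius_2_eqI[OF a0 b0 c0 cop rel Ca _ iden])
    show "\<And>\<rho>. \<rho> < a \<Longrightarrow> 3 \<le> card (class_pairs a b c s C \<rho>)"
      by (rule class_pairs_s_below_2a[OF se ea te ba rel C_def _ b0 c0])
  next
    fix x y z j assume e: "a*x + b*y + c*z = C - a" and m: "y + s*z = (a - e - 1) + a*j"
    have "j < 2 \<or> (j = 2 \<and> 1 < z)" by (rule rep_layer_bound[OF rel a0 Ca iden big e m])
    moreover have "j = 2 \<Longrightarrow> z \<le> 1"
      by (rule le_of_add_mult_less[of y s z "a - e - 1 + a*2"]) (use m se ea in simp_all)
    ultimately consider "j = 0" | "j = 1" by linarith
    then show "(y, z) \<in> {(a - e - 1, 0), (2*a - e - 1, 0)}"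
    proof cases
      case 1
      have "z \<le> 0" by (rule le_of_add_mult_less[of y s z "a - e - 1"]) (use m 1 se ea in simp_all)
      then show ?thesis using m 1 by simp
    next
      case 2
      have "z \<le> 0" by (rule le_of_add_mult_less[of y s z "a - e - 1 + a"]) (use m 2 se ea in simp_all)
      then show ?thesis using m 2 ea by auto
    qed
  qed (use ea in simp)
qed

lemma class_pairs_s_above_a:
  fixes a b c s t e C \<rho> :: nat
  assumes se: "s = a + e" and ea: "e < a" and rel: "c + t*a = s*b"
    and C1: "(a - 1)*b + c \<le> C" and C2: "(2*a - 1)*b \<le> C" and \<rho>a: "\<rho> < a"
    and pos: "b > 0" "c > 0"
  shows "3 \<le> card (class_pairs a b c s C \<rho>)"
proof -
  have a0: "a > 0" using ea by simp
  have "int ((a - 1)*b + c) \<le> int C" "int ((2*a - 1)*b) \<le> int C" using C1 C2 by (simp_all only: zle_int)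
  then have C1I: "(int a - 1) * int b + int c \<le> int C" and C2I: "(2*int a - 1) * int b \<le> int C"
    using a0 by (simp_all add: of_nat_diff)
  have v: "b*(\<rho> + a) + c*0 \<le> C"
  proof (rule zle_int[THEN iffD1])
    have "int b * (int \<rho> + int a) \<le> int b * (2*int a - 1)" using \<rho>a by (intro mult_left_mono) simp_all
    then show "int (b*(\<rho> + a) + c*0) \<le> int C" using C2I by (simp add: algebra_simps)
  qed
  have v1: "b*\<rho> + c*0 \<le> C" using v by (simp add: algebra_simps)
  show ?thesis
  proof (cases "\<rho> < e")
    case True
    have v3: "b*(\<rho> + a - e) + c*1 \<le> C"
    proof (rule zle_int[THEN iffD1])
      have d: "int (\<rho> + a - e) = int \<rho> + int a - int e" using ea by (simp add: of_nat_diff)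
      have "int b * (int \<rho> + int a - int e) \<le> int b * (int a - 1)" using True by (intro mult_left_mono) simp_all
      then show "int (b*(\<rho> + a - e) + c*1) \<le> int C"
        using C1I unfolding of_nat_add of_nat_mult d by (simp add: algebra_simps)
    qed
    show ?thesis
      by (rule three_le_card_class_pairs[where ya=\<rho> and za=0 and yb="\<rho>+a" and zb=0
          and yc="\<rho>+a-e" and zc=1 and ja=0 and jb=1 and jc=2])
        (use v1 v v3 se ea \<rho>a pos in simp_all)
  next
    case False
    have v2: "b*(\<rho> - e) + c*1 \<le> C"
    proof (rule zle_int[THEN iffD1])
      have d: "int (\<rho> - e) = int \<rho> - int e" using False by (simp add: of_nat_diff)
      have "int b * (int \<rho> - int e) \<le> int b * (int a - 1)" using \<rho>a by (intro mult_left_mono) simp_all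
      then show "int (b*(\<rho> - e) + c*1) \<le> int C"
        using C1I unfolding of_nat_add of_nat_mult d by (simp add: algebra_simps)
    qed
    show ?thesis
      by (rule three_le_card_class_pairs[where ya=\<rho> and za=0 and yb="\<rho>-e" and zb=1
          and yc="\<rho>+a" and zc=0 and ja=0 and jb=1 and jc=1])
        (use v1 v2 v se False \<rho>a pos in simp_all)
  qed
qed

lemma p_frobenius_2_s_above_a_lt:
  fixes a b c s t e :: nat
  assumes se: "s = a + e" and e1: "e \<ge> 1" and ea: "e < a" and bt: "2*t \<le> b" and ba: "a \<le> b"
    and rel: "c + t*a = s*b" and cop: "coprime a b" and t1: "t \<ge> 1" and s3: "3*(t*a) \<le> s*b"
    and lt: "t*a < b*e"
  shows "p_frobenius 2 [a, b, c] = int ((a - 1)*b + c) - int a"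
proof -
  define C where "C = (a - 1)*b + c"
  have a0: "a > 0" and b0: "b > 0" using ea ba by simp_all
  have cI: "int c = int s * int b - int t * int a" by (rule int_eq_diff_of_add_eq[OF rel])
  have sI: "int s = int a + int e" using se by simp
  have "int a \<le> int t * int a" using t1 mult_right_mono[of 1 "int t" "int a"] by simp
  moreover have "3 * (int t * int a) \<le> int s * int b" using s3 by (simp only: zle_int flip: of_nat_mult)
  ultimately have ca: "int a \<le> int c" using cI by linarith
  then have c0: "c > 0" using a0 by linarith
  have CI: "int C = (int a - 1) * int b + int c" unfolding C_def using a0 by (simp add: of_nat_diff)
  have "0 \<le> (int a - 1) * int b" using a0 by simp
  then have Ca: "a \<le> C" using ca CI by linarith
  have GI: "int (C - a) = (int a - 1) * int b + int c - int a" using Ca CI by (simp add: of_nat_diff)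
  have iden: "b*(e - 1 + a*2) = C + t*a*1"
  proof -
    have "int (b*(e - 1 + a*2)) = int (C + t*a*1)"
      unfolding of_nat_add of_nat_mult CI using e1 by (simp add: of_nat_diff cI sI algebra_simps)
    then show ?thesis by (simp only: of_nat_eq_iff)
  qed
  have "int (t*a) < int (b*e)" using lt by (simp only: of_nat_less_iff)
  then have "(2*int a - 1) * int b \<le> int C" unfolding CI cI sI by (simp add: algebra_simps)
  then have "int ((2*a - 1)*b) \<le> int C" using a0 by (simp add: of_nat_diff)
  then have "(2*a - 1)*b \<le> C" by (simp only: zle_int)
  have big: "s*(C - a) < (e - 1 + a*(2 + 1))*c"
  proof -
    have "0 \<le> int s * (int b - 2*int t)" using bt by (intro mult_nonneg_nonneg) simp_all
    moreover have "int s * (int b - 2 * int t + 1) + 2 * int t * int e + int t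
        = int s * (int b - 2*int t) + int s + 2 * (int t * int e) + int t"
      by (simp add: algebra_simps)
    moreover have "0 \<le> int t * int e" "1 \<le> int t" "1 \<le> int s" using t1 se a0 by simp_all
    ultimately have "0 < int s * (int b - 2 * int t + 1) + 2 * int t * int e + int t" by linarith
    then have "0 < int a * (int s * (int b - 2 * int t + 1) + 2 * int t * int e + int t)"
      using a0 by simp
    also have "\<dots> = int ((e - 1 + a*(2 + 1))*c) - int (s*(C - a))"
      unfolding of_nat_mult GI using e1 by (simp add: of_nat_diff cI sI algebra_simps)
    finally show ?thesis by linarith
  qed
  show ?thesis unfolding C_def[symmetric]
  proof (rule p_frobenius_2_eqI[OF a0 b0 c0 cop rel Ca _ iden])
    show "\<And>\<rho>. \<rho> < a \<Longrightarrow> 3 \<le> card (class_pairs a b c s C \<rho>)"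
      by (rule class_pairs_s_above_a[OF se ea rel _ \<open>(2*a - 1)*b \<le> C\<close> _ b0 c0]) (simp add: C_def)
  next
    fix x y z j assume e: "a*x + b*y + c*z = C - a" and m: "y + s*z = (e - 1) + a*j"
    have "j < 2 \<or> (j = 2 \<and> 1 < z)" by (rule rep_layer_bound[OF rel a0 Ca iden big e m])
    moreover have "j = 2 \<Longrightarrow> z \<le> 1"
      by (rule le_of_add_mult_less[of y s z "e - 1 + a*2"]) (use m se e1 a0 in simp_all)
    ultimately consider "j = 0" | "j = 1" by linarith
    then show "(y, z) \<in> {(e - 1, 0), (a + e - 1, 0)}"
    proof cases
      case 1
      have "z \<le> 0" by (rule le_of_add_mult_less[of y s z "e - 1"]) (use m 1 se a0 in simp_all)
      then show ?thesis using m 1 by simp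
    next
      case 2
      have "z \<le> 0" by (rule le_of_add_mult_less[of y s z "e - 1 + a"]) (use m 2 se e1 a0 in simp_all)
      then show ?thesis using m 2 e1 by auto
    qed
  qed (use ea in simp)
qed

lemma p_frobenius_2_s_above_a_gt:
  fixes a b c s t e :: nat
  assumes se: "s = a + e" and ea: "e < a" and ba: "a \<le> b"
    and rel: "c + t*a = s*b" and cop: "coprime a b" and t1: "t \<ge> 1" and s3: "3*(t*a) \<le> s*b"
    and gt: "b*e < t*a"
  shows "p_frobenius 2 [a, b, c] = int ((2*a - 1)*b) - int a"
proof -
  define C where "C = (2*a - 1)*b"
  have a0: "a > 0" and b0: "b > 0" using ea ba by simp_all
  have cI: "int c = int s * int b - int t * int a" by (rule int_eq_diff_of_add_eq[OF rel])
  have sI: "int s = int a + int e" using se by simp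
  have s3I: "3 * (int t * int a) \<le> int s * int b" using s3 by (simp only: zle_int flip: of_nat_mult)
  have "int a \<le> int t * int a" using t1 mult_right_mono[of 1 "int t" "int a"] by simp
  then have c0: "c > 0" using s3I cI a0 by linarith
  have CI: "int C = (2*int a - 1) * int b" unfolding C_def using a0 by (simp add: of_nat_diff)
  have "1 * int b \<le> (2*int a - 1) * int b" using a0 by (intro mult_right_mono) simp_all
  then have Ca: "a \<le> C" using CI ba by simp
  have GI: "int (C - a) = (2*int a - 1) * int b - int a" using Ca CI by (simp add: of_nat_diff)
  have iden: "b*(a - 1 + a*1) = C + t*a*0" unfolding C_def using a0 by (simp add: algebra_simps)
  have "int (b*e) < int (t*a)" using gt by (simp only: of_nat_less_iff)
  then have "(int a - 1) * int b + int c \<le> int C" unfolding CI cI sI by (simp add: algebra_simps)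
  then have "int ((a - 1)*b + c) \<le> int C" using a0 by (simp add: of_nat_diff)
  then have "(a - 1)*b + c \<le> C" by (simp only: zle_int)
  have big: "s*(C - a) < (a - 1 + a*(1 + 1))*c"
  proof -
    have "0 < int s * int b - 3 * int t * int a + int t + int s" using s3I t1 se by linarith
    then have "0 < int a * (int s * int b - 3 * int t * int a + int t + int s)" using a0 by simp
    also have "\<dots> = int ((a - 1 + a*(1 + 1))*c) - int (s*(C - a))"
      unfolding of_nat_mult GI using a0 by (simp add: of_nat_diff cI sI algebra_simps)
    finally show ?thesis by linarith
  qed
  show ?thesis unfolding C_def[symmetric]
  proof (rule p_frobenius_2_eqI[OF a0 b0 c0 cop rel Ca _ iden])
    show "\<And>\<rho>. \<rho> < a \<Longrightarrow> 3 \<le> card (class_pairs a b c s C \<rho>)"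
      by (rule class_pairs_s_above_a[OF se ea rel \<open>(a - 1)*b + c \<le> C\<close> _ _ b0 c0]) (simp add: C_def)
  next
    fix x y z j assume e: "a*x + b*y + c*z = C - a" and m: "y + s*z = (a - 1) + a*j"
    have "j < 1 \<or> (j = 1 \<and> 0 < z)" by (rule rep_layer_bound[OF rel a0 Ca iden big e m])
    then show "(y, z) \<in> {(a - 1, 0), (a - 1 - e, 1)}"
    proof
      assume "j < 1"
      then have "z \<le> 0" by (intro le_of_add_mult_less[of y s z "a - 1"]) (use m se a0 in simp_all)
      then show ?thesis using m \<open>j < 1\<close> by simp
    next
      assume j: "j = 1 \<and> 0 < z"
      then have "z \<le> 1" by (intro le_of_add_mult_less[of y s z "a - 1 + a"]) (use m se a0 in simp_all)
      then have z1: "z = 1" using j by simp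
      then have "y + s = a - 1 + a" using m j by simp
      then have "y = a - 1 - e" using se by linarith
      then show ?thesis using z1 by simp
    qed
  qed (use a0 in simp)
qed

lemma class_pairs_a_eq_s_add_t_high:
  fixes a b c s t C \<rho> :: nat
  assumes as: "a = s + t" and ts: "2*t < s" and ba: "a \<le> b" and rel: "c + t*a = s*b"
    and t1: "t \<ge> 1" and C: "C = (2*t - 1)*b + 2*c" and \<rho>a: "\<rho> < a" and pos: "b > 0" "c > 0"
    and high: "s \<le> \<rho>"
  shows "3 \<le> card (class_pairs a b c s C \<rho>)"
proof -
  have cI: "int c = int s * int b - int t * int a" by (rule int_eq_diff_of_add_eq[OF rel])
  have aI: "int a = int s + int t" using as by simp
  have CI: "int C = (2*int t - 1) * int b + 2 * int c" unfolding C using t1 by (simp add: of_nat_diff)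
  have k2: "int t * int a \<le> int t * int b" using ba by (intro mult_left_mono) simp_all
  define y0 where "y0 = \<rho> - s"
  have y0t: "y0 < t" "\<rho> = s + y0" using high \<rho>a as unfolding y0_def by linarith+
  have v1: "b*y0 + c*1 \<le> C"
  proof (rule zle_int[THEN iffD1])
    have "int b * int y0 \<le> int b * (2 * int t - 1)" using y0t by (intro mult_left_mono) simp_all
    then show "int (b*y0 + c*1) \<le> int C" unfolding CI by (simp add: algebra_simps)
  qed
  have v2: "b*\<rho> + c*0 \<le> C"
  proof (rule zle_int[THEN iffD1])
    have "int b * int \<rho> \<le> int b * (int a - 1)" using \<rho>a by (intro mult_left_mono) simp_all
    moreover have "2 * int t * int b \<le> int a * int b" using ts as by (intro mult_right_mono) simp_all
    ultimately show "int (b*\<rho> + c*0) \<le> int C" using k2 unfolding CI by (simp add: cI aI algebra_simps)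
  qed
  have v3: "b*(y0 + t) + c*2 \<le> C"
  proof (rule zle_int[THEN iffD1])
    have "int b * (int y0 + int t) \<le> int b * (2 * int t - 1)" using y0t by (intro mult_left_mono) simp_all
    then show "int (b*(y0 + t) + c*2) \<le> int C" unfolding CI by (simp add: algebra_simps)
  qed
  show ?thesis
    by (rule three_le_card_class_pairs[where ya=y0 and za=1 and yb=\<rho> and zb=0
        and yc="y0+t" and zc=2 and ja=0 and jb=0 and jc=1])
      (use v1 v2 v3 y0t as \<rho>a pos in simp_all)
qed

lemma class_pairs_a_eq_s_add_t_low:
  fixes a b c s t C \<rho> :: nat
  assumes as: "a = s + t" and ts: "2*t < s" and ba: "a \<le> b" and rel: "c + t*a = s*b"
    and t1: "t \<ge> 1" and C: "C = (2*t - 1)*b + 2*c" and \<rho>a: "\<rho> < a" and pos: "b > 0" "c > 0"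
    and low: "\<rho> < s"
  shows "3 \<le> card (class_pairs a b c s C \<rho>)"
proof -
  have cI: "int c = int s * int b - int t * int a" by (rule int_eq_diff_of_add_eq[OF rel])
  have aI: "int a = int s + int t" using as by simp
  have CI: "int C = (2*int t - 1) * int b + 2 * int c" unfolding C using t1 by (simp add: of_nat_diff)
  have k2: "int t * int a \<le> int t * int b" using ba by (intro mult_left_mono) simp_all
  show ?thesis
  proof (cases "\<rho> + t < s")
    case True
    have v2: "b*(\<rho> + a) + c*0 \<le> C"
    proof (rule zle_int[THEN iffD1])
      have "int b * (int \<rho> + int a) \<le> int b * (2 * int s - 1)" using True as by (intro mult_left_mono) simp_all
      then show "int (b*(\<rho> + a) + c*0) \<le> int C" using k2 unfolding CI by (simp add: cI aI algebra_simps)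
    qed
    have v1: "b*\<rho> + c*0 \<le> C" using v2 by (simp add: algebra_simps)
    have v3: "b*(\<rho> + t) + c*1 \<le> C"
    proof (rule zle_int[THEN iffD1])
      have "int b * (int \<rho> + int t) \<le> int b * (int s - 1)" using True by (intro mult_left_mono) simp_all
      moreover have "int t * int a \<le> 2 * (int t * int b)"
        using k2 mult_nonneg_nonneg[of "int t" "int b"] by linarith
      ultimately show "int (b*(\<rho> + t) + c*1) \<le> int C" unfolding CI by (simp add: cI aI algebra_simps)
    qed
    show ?thesis
      by (rule three_le_card_class_pairs[where ya=\<rho> and za=0 and yb="\<rho>+a" and zb=0
          and yc="\<rho>+t" and zc=1 and ja=0 and jb=1 and jc=1])
        (use v1 v2 v3 as \<rho>a t1 pos in simp_all)
  next
    case False2: False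
    have v2: "b*(\<rho> + t) + c*1 \<le> C"
    proof (rule zle_int[THEN iffD1])
      have "int b * (int \<rho> + int t) \<le> int b * (int s + int t - 1)" using low by (intro mult_left_mono) simp_all
      then show "int (b*(\<rho> + t) + c*1) \<le> int C" using k2 unfolding CI by (simp add: cI aI algebra_simps)
    qed
    have v1: "b*\<rho> + c*0 \<le> C" using v2 by (simp add: algebra_simps)
    have v3: "b*(\<rho> + t - s) + c*2 \<le> C"
    proof (rule zle_int[THEN iffD1])
      have d: "int (\<rho> + t - s) = int \<rho> + int t - int s" using False2 by (simp add: of_nat_diff)
      have "int b * (int \<rho> + int t - int s) \<le> int b * (2 * int t - 1)" using low t1 by (intro mult_left_mono) simp_all
      then show "int (b*(\<rho> + t - s) + c*2) \<le> int C" unfolding CI of_nat_add of_nat_mult d by (simp add: algebra_simps)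
    qed
    show ?thesis
      by (rule three_le_card_class_pairs[where ya=\<rho> and za=0 and yb="\<rho>+t" and zb=1
          and yc="\<rho>+t-s" and zc=2 and ja=0 and jb=1 and jc=1])
        (use v1 v2 v3 as False2 \<rho>a pos in simp_all)
  qed
qed

lemma class_pairs_a_eq_s_add_t:
  fixes a b c s t C \<rho> :: nat
  assumes as: "a = s + t" and ts: "2*t < s" and ba: "a \<le> b" and rel: "c + t*a = s*b"
    and t1: "t \<ge> 1" and C: "C = (2*t - 1)*b + 2*c" and \<rho>a: "\<rho> < a" and pos: "b > 0" "c > 0"
  shows "3 \<le> card (class_pairs a b c s C \<rho>)"
proof (cases "s \<le> \<rho>")
  case True
  then show ?thesis by (rule class_pairs_a_eq_s_add_t_high[OF as ts ba rel t1 C \<rho>a pos])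
next
  case False
  then show ?thesis by (intro class_pairs_a_eq_s_add_t_low[OF as ts ba rel t1 C \<rho>a pos]) simp
qed

lemma p_frobenius_2_a_eq_s_add_t:
  fixes a b c s t :: nat
  assumes as: "a = s + t" and ts: "2*t < s" and b3: "3*t \<le> b" and ba: "a \<le> b"
    and rel: "c + t*a = s*b" and cop: "coprime a b" and t1: "t \<ge> 1"
  shows "p_frobenius 2 [a, b, c] = int ((2*t - 1)*b + 2*c) - int a"
proof -
  define C where "C = (2*t - 1)*b + 2*c"
  have a0: "a > 0" and b0: "b > 0" using as t1 ba by simp_all
  have cI: "int c = int s * int b - int t * int a" by (rule int_eq_diff_of_add_eq[OF rel])
  have aI: "int a = int s + int t" using as by simp
  have "(2 * int t + 1) * int b \<le> int s * int b" using ts by (intro mult_right_mono) simp_all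
  then have "2 * (int t * int b) + int b \<le> int s * int b" by (simp add: algebra_simps)
  moreover have "int t * int a \<le> int t * int b" using ba by (intro mult_left_mono) simp_all
  moreover have "0 \<le> int t * int b" by simp
  ultimately have ca: "int a \<le> int c" using ba cI by linarith
  then have c0: "c > 0" using a0 by linarith
  have CI: "int C = (2*int t - 1) * int b + 2 * int c" unfolding C_def using t1 by (simp add: of_nat_diff)
  have "0 \<le> (2*int t - 1) * int b" using t1 by simp
  then have Ca: "a \<le> C" using ca CI by linarith
  have GI: "int (C - a) = (2*int t - 1) * int b + 2 * int c - int a" using Ca CI by (simp add: of_nat_diff)
  have iden: "b*(a - 1 + a*1) = C + t*a*2"
  proof -
    have "int (b*(a - 1 + a*1)) = int (C + t*a*2)"
      unfolding of_nat_add of_nat_mult CI using a0 by (simp add: of_nat_diff cI aI algebra_simps)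
    then show ?thesis by (simp only: of_nat_eq_iff)
  qed
  have big: "s*(C - a) < (a - 1 + a*(1 + 1))*c"
  proof -
    have "(2*int t + 1) * (2*int t + 1) \<le> int s * (int b - int t + 1)"
      using ts b3 by (intro mult_mono) simp_all
    moreover have "(2*int t + 1) * (2*int t + 1) = 4 * (int t * int t) + 4 * int t + 1"
      by (simp add: algebra_simps)
    moreover have "0 \<le> int t * int t" by simp
    ultimately have "0 < int s * (int b - int t + 1) - 3 * int t * int t + int t" using t1 by linarith
    then have "0 < int a * (int s * (int b - int t + 1) - 3 * int t * int t + int t)" using a0 by simp
    also have "\<dots> = int ((a - 1 + a*(1 + 1))*c) - int (s*(C - a))"
      unfolding of_nat_mult GI using a0 by (simp add: of_nat_diff cI aI algebra_simps)
    finally show ?thesis by linarith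
  qed
  show ?thesis unfolding C_def[symmetric]
  proof (rule p_frobenius_2_eqI[OF a0 b0 c0 cop rel Ca _ iden])
    show "\<And>\<rho>. \<rho> < a \<Longrightarrow> 3 \<le> card (class_pairs a b c s C \<rho>)"
      by (rule class_pairs_a_eq_s_add_t[OF as ts ba rel t1 C_def _ b0 c0])
  next
    fix x y z j assume e: "a*x + b*y + c*z = C - a" and m: "y + s*z = (a - 1) + a*j"
    have "j < 1 \<or> (j = 1 \<and> 2 < z)" by (rule rep_layer_bound[OF rel a0 Ca iden big e m])
    moreover have "j = 1 \<Longrightarrow> z \<le> 2"
      by (rule le_of_add_mult_less[of y s z "a - 1 + a*1"]) (use m as ts in simp_all)
    ultimately have j0: "j = 0" by linarith
    have "z \<le> 1" by (rule le_of_add_mult_less[of y s z "a - 1"]) (use m j0 as ts in simp_all)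
    then consider "z = 0" | "z = 1" by linarith
    then show "(y, z) \<in> {(a - 1, 0), (t - 1, 1)}" using m j0 as t1 by cases auto
  qed (use a0 in simp)
qed

text \<open>With \<rho> = z0 s + y0 and y0 < s, the three pairs of class \<rho> are chosen according to
  whether z0 \<ge> 2 (high), z0 = 0 (low) or z0 = 1 (mid).\<close>

lemma rs_add_q_bounds:
  fixes b c s t a q r M :: nat
  assumes q: "1 \<le> q" "q \<le> s" and rel: "c + t*a = s*b" and sb: "2*(t*a) \<le> s*b"
    and M1: "(q - 1)*b + (r + 2)*c \<le> M" and M2: "(s - 1)*b + (r + 1)*c \<le> M"
  shows "c \<le> s*b" "int s * int b \<le> 2 * int c"
    "(int q - 1) * int b + (int r + 2) * int c \<le> int M"
    "(int s - 1) * int b + (int r + 1) * int c \<le> int M"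
proof -
  show "c \<le> s*b" using rel by linarith
  have "s*b \<le> 2*c" using rel sb by linarith
  then show "int s * int b \<le> 2 * int c" by (metis of_nat_le_iff of_nat_mult of_nat_numeral)
  have "int ((q - 1)*b + (r + 2)*c) \<le> int M" using M1 by (simp only: zle_int)
  then show "(int q - 1) * int b + (int r + 2) * int c \<le> int M"
    unfolding of_nat_add of_nat_mult of_nat_diff[OF q(1)] by simp
  have "int ((s - 1)*b + (r + 1)*c) \<le> int M" using M2 by (simp only: zle_int)
  then show "(int s - 1) * int b + (int r + 1) * int c \<le> int M"
    unfolding of_nat_add of_nat_mult of_nat_diff[OF order.trans[OF q]] by simp
qed

lemma class_pairs_rs_add_q_high:
  fixes a b c s t r q M \<rho> y0 z :: nat
  assumes a: "a = r*s + q" and q: "1 \<le> q" "q \<le> s" and rel: "c + t*a = s*b" and sb: "2*(t*a) \<le> s*b"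
    and M1: "(q - 1)*b + (r + 2)*c \<le> M" and M2: "(s - 1)*b + (r + 1)*c \<le> M"
    and \<rho>: "\<rho> = (z + 2)*s + y0" "y0 < s" "\<rho> < a" and pos: "b > 0" "c > 0"
  shows "3 \<le> card (class_pairs a b c s M \<rho>)"
proof -
  obtain cle: "c \<le> s*b" and I1: "int s * int b \<le> 2 * int c"
    and M1I: "(int q - 1) * int b + (int r + 2) * int c \<le> int M"
    and M2I: "(int s - 1) * int b + (int r + 1) * int c \<le> int M"
    using rs_add_q_bounds[OF q rel sb M1 M2] by blast
  have zr: "z + 2 \<le> r"
  proof -
    have "(z + 2)*s < (r + 1)*s" using \<rho> a q by (simp add: algebra_simps)
    then have "z + 2 < r + 1" using mult_less_cancel2 by blast
    then show ?thesis by simp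
  qed
  have v3: "b*(y0 + 2*s) + c*z \<le> M"
  proof (rule zle_int[THEN iffD1], cases "z + 3 \<le> r")
    case True
    have "int b * int y0 \<le> int b * (int s - 1)" using \<rho> by (intro mult_left_mono) simp_all
    moreover have "int c * int z \<le> int c * (int r - 3)" using True by (intro mult_left_mono) simp_all
    ultimately show "int (b*(y0 + 2*s) + c*z) \<le> int M" using I1 M2I by (simp add: algebra_simps)
  next
    case False
    then have zr': "z + 2 = r" using zr by simp
    then have "y0 < q" using \<rho> a by simp
    then have "int b * int y0 \<le> int b * (int q - 1)" by (intro mult_left_mono) simp_all
    then show "int (b*(y0 + 2*s) + c*z) \<le> int M" using I1 M1I zr'[symmetric] by (simp add: algebra_simps)
  qed
  have v2: "b*(y0 + s) + c*(z + 1) \<le> b*(y0 + 2*s) + c*z" using cle by (simp add: algebra_simps)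
  have v1: "b*y0 + c*(z + 2) \<le> b*(y0 + s) + c*(z + 1)" using cle by (simp add: algebra_simps)
  show ?thesis
    by (rule three_le_card_class_pairs[where ya=y0 and za="z+2" and yb="y0+s" and zb="z+1"
        and yc="y0+2*s" and zc=z and ja=0 and jb=0 and jc=0])
      (use v1 v2 v3 \<rho> pos in \<open>simp_all add: algebra_simps\<close>)
qed

lemma class_pairs_rs_add_q_low:
  fixes a b c s t r q M \<rho> :: nat
  assumes a: "a = r*s + q" and q: "1 \<le> q" "q \<le> s" and r: "r \<ge> 2"
    and rel: "c + t*a = s*b" and sb: "2*(t*a) \<le> s*b"
    and M1: "(q - 1)*b + (r + 2)*c \<le> M" and M2: "(s - 1)*b + (r + 1)*c \<le> M"
    and \<rho>: "\<rho> < s" and pos: "b > 0" "c > 0"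
  shows "3 \<le> card (class_pairs a b c s M \<rho>)"
proof -
  obtain cle: "c \<le> s*b" and I1: "int s * int b \<le> 2 * int c"
    and M1I: "(int q - 1) * int b + (int r + 2) * int c \<le> int M"
    and M2I: "(int s - 1) * int b + (int r + 1) * int c \<le> int M"
    using rs_add_q_bounds[OF q rel sb M1 M2] by blast
  have \<rho>b: "int b * int \<rho> \<le> int b * (int s - 1)" using \<rho> by (intro mult_left_mono) simp_all
  have "s \<le> r*s" using r by simp
  then have \<rho>a: "\<rho> < a" using \<rho> a by linarith
  have v1: "b*\<rho> + c*0 \<le> M"
  proof (rule zle_int[THEN iffD1])
    show "int (b*\<rho> + c*0) \<le> int M"
      using \<rho>b M2I by (simp add: algebra_simps) (use mult_nonneg_nonneg[of "int c" "int r"] in linarith)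
  qed
  show ?thesis
  proof (cases "\<rho> + q < s")
    case True
    obtain r' where r': "r = r' + 1" using r by (metis add.commute le_Suc_ex one_le_numeral order_trans)
    have v3: "b*(\<rho> + q + s) + c*r' \<le> M"
    proof (rule zle_int[THEN iffD1])
      have "int b * (int \<rho> + int q) \<le> int b * (int s - 1)" using True by (intro mult_left_mono) simp_all
      then show "int (b*(\<rho> + q + s) + c*r') \<le> int M" using M2I I1 r' by (simp add: algebra_simps)
    qed
    have v2: "b*(\<rho> + q) + c*r \<le> b*(\<rho> + q + s) + c*r'" using cle r' by (simp add: algebra_simps)
    show ?thesis
      by (rule three_le_card_class_pairs[where ya=\<rho> and za=0 and yb="\<rho>+q" and zb=r
          and yc="\<rho>+q+s" and zc=r' and ja=0 and jb=1 and jc=1])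
        (use v1 v2 v3 r' a q \<rho> \<rho>a pos in \<open>simp_all add: algebra_simps\<close>)
  next
    case False
    have v3: "b*(\<rho> + q) + c*r \<le> M"
    proof (rule zle_int[THEN iffD1])
      have "int b * (int \<rho> + int q) \<le> int b * (int s - 1 + int q)" using \<rho> by (intro mult_left_mono) simp_all
      then show "int (b*(\<rho> + q) + c*r) \<le> int M" using M1I I1 by (simp add: algebra_simps)
    qed
    have "b*(\<rho> + q - s) + b*s = b*(\<rho> + q)" using False
      by (metis add_mult_distrib2 le_add_diff_inverse2 not_less)
    then have v2: "b*(\<rho> + q - s) + c*(r + 1) \<le> b*(\<rho> + q) + c*r" using cle by (simp add: algebra_simps)
    show ?thesis
      by (rule three_le_card_class_pairs[where ya=\<rho> and za=0 and yb="\<rho>+q-s" and zb="r+1"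
          and yc="\<rho>+q" and zc=r and ja=0 and jb=1 and jc=1])
        (use v1 v2 v3 a False q \<rho> \<rho>a pos in \<open>simp_all add: algebra_simps\<close>)
  qed
qed

lemma class_pairs_rs_add_q_mid:
  fixes a b c s t r q M \<rho> y0 :: nat
  assumes a: "a = r*s + q" and q: "1 \<le> q" "q \<le> s" and r: "r \<ge> 2"
    and rel: "c + t*a = s*b" and sb: "2*(t*a) \<le> s*b"
    and M1: "(q - 1)*b + (r + 2)*c \<le> M" and M2: "(s - 1)*b + (r + 1)*c \<le> M"
    and \<rho>: "\<rho> = s + y0" "y0 < s" and pos: "b > 0" "c > 0"
  shows "3 \<le> card (class_pairs a b c s M \<rho>)"
proof -
  obtain cle: "c \<le> s*b" and I1: "int s * int b \<le> 2 * int c"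
    and M1I: "(int q - 1) * int b + (int r + 2) * int c \<le> int M"
    and M2I: "(int s - 1) * int b + (int r + 1) * int c \<le> int M"
    using rs_add_q_bounds[OF q rel sb M1 M2] by blast
  have y0b: "int b * int y0 \<le> int b * (int s - 1)" using \<rho> by (intro mult_left_mono) simp_all
  have "2*s \<le> r*s" using r by simp
  then have \<rho>a: "\<rho> < a" using \<rho> a by linarith
  have v1: "b*y0 + c*1 \<le> M"
  proof (rule zle_int[THEN iffD1])
    show "int (b*y0 + c*1) \<le> int M"
      using y0b M2I by (simp add: algebra_simps) (use mult_nonneg_nonneg[of "int c" "int r"] in linarith)
  qed
  have v2: "b*(y0 + s) + c*0 \<le> M"
  proof (rule zle_int[THEN iffD1])
    have "2 * int c \<le> (int r + 1) * int c" using r by (intro mult_right_mono) simp_all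
    then show "int (b*(y0 + s) + c*0) \<le> int M" using y0b M2I I1 by (simp add: algebra_simps)
  qed
  show ?thesis
  proof (cases "y0 + q < s")
    case True
    have v3: "b*(y0 + q) + c*(r + 1) \<le> M"
    proof (rule zle_int[THEN iffD1])
      have "int b * (int y0 + int q) \<le> int b * (int s - 1)" using True by (intro mult_left_mono) simp_all
      then show "int (b*(y0 + q) + c*(r + 1)) \<le> int M" using M2I by (simp add: algebra_simps)
    qed
    show ?thesis
      by (rule three_le_card_class_pairs[where ya=y0 and za=1 and yb="y0+s" and zb=0
          and yc="y0+q" and zc="r+1" and ja=0 and jb=0 and jc=1])
        (use v1 v2 v3 \<rho> \<rho>a a q pos in \<open>simp_all add: algebra_simps\<close>)
  next
    case False
    have v3: "b*(y0 + q - s) + c*(r + 2) \<le> M"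
    proof (rule zle_int[THEN iffD1])
      have d: "int (y0 + q - s) = int y0 + int q - int s" using False by (simp add: of_nat_diff)
      have "int b * (int y0 + int q - int s) \<le> int b * (int q - 1)" using \<rho> by (intro mult_left_mono) simp_all
      then show "int (b*(y0 + q - s) + c*(r + 2)) \<le> int M"
        using M1I unfolding of_nat_add of_nat_mult d by (simp add: algebra_simps)
    qed
    show ?thesis
      by (rule three_le_card_class_pairs[where ya=y0 and za=1 and yb="y0+s" and zb=0
          and yc="y0+q-s" and zc="r+2" and ja=0 and jb=0 and jc=1])
        (use v1 v2 v3 \<rho> \<rho>a a q False pos in \<open>simp_all add: algebra_simps\<close>)
  qed
qed

lemma class_pairs_rs_add_q:
  fixes a b c s t r q M \<rho> :: nat
  assumes a: "a = r*s + q" and q: "1 \<le> q" "q \<le> s" and r: "r \<ge> 2"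
    and rel: "c + t*a = s*b" and sb: "2*(t*a) \<le> s*b"
    and M1: "(q - 1)*b + (r + 2)*c \<le> M" and M2: "(s - 1)*b + (r + 1)*c \<le> M"
    and \<rho>: "\<rho> < a" and pos: "b > 0" "c > 0"
  shows "3 \<le> card (class_pairs a b c s M \<rho>)"
proof -
  have s0: "s > 0" using q by simp
  have \<rho>d: "\<rho> = (\<rho> div s)*s + \<rho> mod s" and y0: "\<rho> mod s < s" using s0 by simp_all
  consider "\<rho> div s = 0" | "\<rho> div s = 1" | z where "\<rho> div s = z + 2"
    by (metis One_nat_def add_2_eq_Suc' less_2_cases not_less le_Suc_ex add.commute)
  then show ?thesis
  proof cases
    case 1
    then have "\<rho> < s" using \<rho>d y0 by simp
    then show ?thesis by (rule class_pairs_rs_add_q_low[OF a q r rel sb M1 M2 _ pos])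
  next
    case 2
    then have "\<rho> = s + \<rho> mod s" using \<rho>d by simp
    then show ?thesis by (rule class_pairs_rs_add_q_mid[OF a q r rel sb M1 M2 _ y0 pos])
  next
    case (3 z)
    then have "\<rho> = (z + 2)*s + \<rho> mod s" using \<rho>d by simp
    then show ?thesis by (rule class_pairs_rs_add_q_high[OF a q rel sb M1 M2 _ y0 \<rho> pos])
  qed
qed

lemma rs_add_q_basic:
  fixes a b c s t r q :: nat
  assumes a: "a = r*s + q" and q: "1 \<le> q" "q \<le> s" and r: "r \<ge> 2" and rel: "c + t*a = s*b"
    and bt: "(r + 3)*t \<le> b" and sb: "2*(t*a) \<le> s*b" and t: "t \<ge> 1"
  shows "s \<ge> 1" "a > 0" "b > 0" "c > 0" "2*s + 1 \<le> a" "a \<le> c" "(int r + 3) * int t \<le> int b"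
proof -
  show "s \<ge> 1" "a > 0" using q a by auto
  have "t \<le> (r + 3)*t" by simp
  then show "b > 0" using bt t by linarith
  have "2*s \<le> r*s" using r by simp
  then show "2*s + 1 \<le> a" using a q by linarith
  have "t*a \<le> c" using rel sb by linarith
  moreover have "a \<le> t*a" using t by simp
  ultimately show "c > 0" "a \<le> c" using \<open>a > 0\<close> by linarith+
  show "(int r + 3) * int t \<le> int b" using bt by (metis of_nat_le_iff of_nat_mult of_nat_add of_nat_numeral)
qed

lemma p_frobenius_2_rs_add_q_ge:
  fixes a b c s t r q :: nat
  assumes a: "a = r*s + q" and q: "1 \<le> q" "q \<le> s" and r: "r \<ge> 2" and rel: "c + t*a = s*b"
    and cop: "coprime a b" and bt: "(r + 3)*t \<le> b" and sb: "2*(t*a) \<le> s*b" and t: "t \<ge> 1"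
    and ge: "t*a \<le> q*b"
  shows "p_frobenius 2 [a, b, c] = int ((q - 1)*b + (r + 2)*c) - int a"
proof -
  define C where "C = (q - 1)*b + (r + 2)*c"
  obtain s0: "s \<ge> 1" and a0: "a > 0" and b0: "b > 0" and c0: "c > 0" and a2: "2*s + 1 \<le> a"
    and ca: "a \<le> c" and btI: "(int r + 3) * int t \<le> int b"
    using rs_add_q_basic[OF a q r rel bt sb t] by blast
  have cI: "int c = int s * int b - int t * int a" by (rule int_eq_diff_of_add_eq[OF rel])
  have aI: "int a = int r * int s + int q" using a by simp
  have CI: "int C = (int q - 1)*int b + (int r + 2) * int c"
    unfolding C_def of_nat_add of_nat_mult of_nat_diff[OF q(1)] by simp
  have Ca: "a \<le> C" unfolding C_def using ca by (simp add: trans_le_add2)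
  have "int (t*a) \<le> int (q*b)" using ge by (simp only: of_nat_le_iff)
  then have "(int s - 1)*int b + (int r + 1)*int c \<le> int C" unfolding CI cI by (simp add: algebra_simps)
  then have "int ((s - 1)*b + (r + 1)*c) \<le> int C"
    unfolding of_nat_add of_nat_mult of_nat_diff[OF s0] by simp
  then have C2: "(s - 1)*b + (r + 1)*c \<le> C" by (simp only: zle_int)
  have iden: "b*(2*s - 1 + a*1) = C + t*a*(r + 2)"
  proof -
    have "int (b*(2*s - 1 + a*1)) = int (C + t*a*(r + 2))"
      using s0 unfolding of_nat_add of_nat_mult CI by (simp add: of_nat_diff cI aI algebra_simps)
    then show ?thesis by (simp only: of_nat_eq_iff)
  qed
  have big: "s*(C - a) < (2*s - 1 + a*(1 + 1))*c"
  proof -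
    have k1: "int t * int q \<le> int t * int s" using q by (intro mult_left_mono) simp_all
    have k2: "0 \<le> int s * (int b - int t * int r - 2 * int t)"
      using btI by (intro mult_nonneg_nonneg) (simp_all add: algebra_simps)
    have "int s * (int b - int t * int r + 1) + int t - 2 * int t * int q =
        int s * (int b - int t * int r - 2 * int t) + int s + int t + 2*(int t * int s - int t * int q)"
      by (simp add: algebra_simps)
    moreover have "0 < int s * (int b - int t * int r - 2 * int t) + int s + int t
        + 2*(int t * int s - int t * int q)"
      using k1 k2 s0 t by (smt (verit) of_nat_le_iff of_nat_1)
    ultimately have "0 < int s * (int b - int t * int r + 1) + int t - 2 * int t * int q" by simp
    then have "0 < int a * (int s * (int b - int t * int r + 1) + int t - 2 * int t * int q)"
      using a0 by simp
    also have "\<dots> = int ((2*s - 1 + a*(1 + 1))*c) - int (s*(C - a))"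
      using s0 Ca unfolding of_nat_mult of_nat_diff[OF Ca] CI
      by (simp add: of_nat_diff cI aI algebra_simps)
    finally show ?thesis by linarith
  qed
  show ?thesis unfolding C_def[symmetric]
  proof (rule p_frobenius_2_eqI[OF a0 b0 c0 cop rel Ca _ iden])
    show "\<And>\<rho>. \<rho> < a \<Longrightarrow> 3 \<le> card (class_pairs a b c s C \<rho>)"
      by (rule class_pairs_rs_add_q[OF a q r rel sb _ C2 _ b0 c0]) (simp add: C_def)
  next
    fix x y z j assume e: "a*x + b*y + c*z = C - a" and m: "y + s*z = (2*s - 1) + a*j"
    have "j < 1 \<or> (j = 1 \<and> r + 2 < z)" by (rule rep_layer_bound[OF rel a0 Ca iden big e m])
    moreover have "j = 1 \<Longrightarrow> z \<le> r + 2"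
      by (rule le_of_add_mult_less[of y s z "2*s - 1 + a*1"])
        (use m a q s0 in \<open>simp_all add: algebra_simps\<close>)
    ultimately have j0: "j = 0" by linarith
    have "z \<le> 1" by (rule le_of_add_mult_less[of y s z "2*s - 1"]) (use m j0 s0 in simp_all)
    then consider "z = 0" | "z = 1" by linarith
    then show "(y, z) \<in> {(2*s - 1, 0), (s - 1, 1)}" using m j0 by cases auto
  qed (use a2 in simp)
qed

lemma p_frobenius_2_rs_add_q_lt:
  fixes a b c s t r q :: nat
  assumes a: "a = r*s + q" and q: "1 \<le> q" "q \<le> s" and r: "r \<ge> 2" and rel: "c + t*a = s*b"
    and cop: "coprime a b" and bt: "(r + 3)*t \<le> b" and sb: "2*(t*a) \<le> s*b" and t: "t \<ge> 1"
    and lt: "q*b < t*a"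
  shows "p_frobenius 2 [a, b, c] = int ((s - 1)*b + (r + 1)*c) - int a"
proof -
  define C where "C = (s - 1)*b + (r + 1)*c"
  obtain s0: "s \<ge> 1" and a0: "a > 0" and b0: "b > 0" and c0: "c > 0" and a2: "2*s + 1 \<le> a"
    and ca: "a \<le> c" and btI: "(int r + 3) * int t \<le> int b"
    using rs_add_q_basic[OF a q r rel bt sb t] by blast
  have cI: "int c = int s * int b - int t * int a" by (rule int_eq_diff_of_add_eq[OF rel])
  have aI: "int a = int r * int s + int q" using a by simp
  have qs: "q < s"
  proof (rule ccontr)
    assume "\<not> q < s"
    then have "q = s" using q by simp
    then show False using lt sb by (simp add: algebra_simps)
  qed
  have CI: "int C = (int s - 1)*int b + (int r + 1) * int c"
    unfolding C_def of_nat_add of_nat_mult of_nat_diff[OF s0] by simp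
  have Ca: "a \<le> C" unfolding C_def using ca by (simp add: trans_le_add2)
  have "int (q*b) < int (t*a)" using lt by (simp only: of_nat_less_iff)
  then have "(int q - 1)*int b + (int r + 2)*int c \<le> int C" unfolding CI cI by (simp add: algebra_simps)
  then have "int ((q - 1)*b + (r + 2)*c) \<le> int C"
    unfolding of_nat_add of_nat_mult of_nat_diff[OF q(1)] by simp
  then have C1: "(q - 1)*b + (r + 2)*c \<le> C" by (simp only: zle_int)
  have iden: "b*(2*s - q - 1 + a*1) = C + t*a*(r + 1)"
  proof -
    have "int (b*(2*s - q - 1 + a*1)) = int (C + t*a*(r + 1))"
      using s0 qs unfolding of_nat_add of_nat_mult CI by (simp add: of_nat_diff cI aI algebra_simps)
    then show ?thesis by (simp only: of_nat_eq_iff)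
  qed
  have big: "s*(C - a) < (2*s - q - 1 + a*(1 + 1))*c"
  proof -
    have k1: "int t * (int q - 1) \<le> int t * (int s - 1)" using qs by (intro mult_left_mono) simp_all
    have k2: "int s * (int t + 1) \<le> int s * (int b - (int r + 1) * int t + 1)"
      using btI by (intro mult_left_mono) (simp_all add: algebra_simps)
    have "int s * (int t + 1) - int t * (int s - 1) = int s + int t" by (simp add: algebra_simps)
    moreover have "int t * (1 - int q) = - (int t * (int q - 1))" by (simp add: algebra_simps)
    ultimately have "0 < int s * (int b - (int r + 1) * int t + 1) + int t * (1 - int q)"
      using k1 k2 s0 t by linarith
    then have "0 < int a * (int s * (int b - (int r + 1) * int t + 1) + int t * (1 - int q))"
      using a0 by simp
    also have "\<dots> = int ((2*s - q - 1 + a*(1 + 1))*c) - int (s*(C - a))"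
      using s0 Ca qs unfolding of_nat_mult of_nat_diff[OF Ca] CI
      by (simp add: of_nat_diff cI aI algebra_simps)
    finally show ?thesis by linarith
  qed
  show ?thesis unfolding C_def[symmetric]
  proof (rule p_frobenius_2_eqI[OF a0 b0 c0 cop rel Ca _ iden])
    show "\<And>\<rho>. \<rho> < a \<Longrightarrow> 3 \<le> card (class_pairs a b c s C \<rho>)"
      by (rule class_pairs_rs_add_q[OF a q r rel sb C1 _ _ b0 c0]) (simp add: C_def)
  next
    fix x y z j assume e: "a*x + b*y + c*z = C - a" and m: "y + s*z = (2*s - q - 1) + a*j"
    have "j < 1 \<or> (j = 1 \<and> r + 1 < z)" by (rule rep_layer_bound[OF rel a0 Ca iden big e m])
    moreover have "j = 1 \<Longrightarrow> z \<le> r + 1"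
      by (rule le_of_add_mult_less[of y s z "2*s - q - 1 + a*1"])
        (use m a q s0 qs in \<open>simp_all add: algebra_simps\<close>)
    ultimately have j0: "j = 0" by linarith
    have "z \<le> 1" by (rule le_of_add_mult_less[of y s z "2*s - q - 1"]) (use m j0 s0 in simp_all)
    then consider "z = 0" | "z = 1" by linarith
    then show "(y, z) \<in> {(2*s - q - 1, 0), (s - q - 1, 1)}" using m j0 qs by cases auto
  qed (use a2 in simp)
qed

section \<open>Lucas triples\<close>

lemma p_frobenius_2_lucas_far:
  assumes hi: "i \<ge> 3" and hk: "k \<ge> i + 4"
  shows "p_frobenius 2 [lucas i, lucas (i+2), lucas (i+k)]
    = (3 * int (lucas i) - 1) * int (lucas (i+2)) - int (lucas i)"
proof -
  obtain A B where AB: "A \<le> B" "1 \<le> B" "B \<le> 2*A + 1"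
    and L: "lucas i = 3*A + 4*B" "lucas (i+2) = 7*A + 11*B"
    and F: "fib (i-3) = A" "fib (i-2) = B" "fib (i-1) = A + B" "fib i = A + 2*B" "fib (i+1) = 2*A + 3*B"
    "fib (i+2) = 3*A + 5*B" "fib (i+3) = 5*A + 8*B" "fib (i+4) = 8*A + 13*B" "fib (i+5) = 13*A + 21*B"
    and "i = 3 \<longleftrightarrow> A = 0"
    by (rule lucas_fib_near[OF hi])
  define a b c s t where "a = lucas i" and "b = lucas (i+2)" and "c = lucas (i+k)"
    and "s = fib k" and "t = fib (k-2)"
  note defs = a_def b_def c_def s_def t_def
  have rel: "c + t*a = s*b" unfolding defs by (rule lucas_add_fib') (use hk in simp)
  have cop: "coprime a b" unfolding defs by (rule coprime_lucas_add2)
  have a1: "a \<ge> 1" and ba: "2*a \<le> b" unfolding defs using L AB by simp_all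
  have "fib (i+4) \<le> fib k" by (rule fib_mono) (use hk in simp)
  then have sa: "3*a \<le> s" unfolding defs using L F AB by simp
  have ts: "t \<le> s" unfolding defs by (rule fib_mono) simp
  have cI: "int c = int s * int b - int t * int a" by (rule int_eq_diff_of_add_eq[OF rel])
  have "int t * int a \<le> int s * int a" using ts by (intro mult_right_mono) simp_all
  moreover have "3 * int a * (int b - int a) \<le> int s * (int b - int a)" using sa ba by (intro mult_right_mono) simp_all
  moreover have "2 * int a * int a \<le> int b * int a" using ba by (intro mult_right_mono) simp_all
  ultimately have "3 * (int a * int b) \<le> 2 * int c" using cI by (simp add: algebra_simps)
  then have c2: "3*(a*b) \<le> 2*c" by (metis of_nat_le_iff of_nat_mult of_nat_numeral)
  have alt: "t \<le> b \<or> 3*(a*b) \<le> c"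
  proof (cases "k = i + 4")
    case True
    then have "t = fib (i+2)" unfolding defs by simp
    then show ?thesis using F L unfolding defs by simp
  next
    case False
    then have k5: "k \<ge> i + 5" using hk by simp
    have "fib (i+5) \<le> fib k" by (rule fib_mono) (use k5 in simp)
    then have s3: "3*a \<le> s" unfolding defs using L F AB by simp
    have "fib (i+4) \<le> fib (k-1)" by (rule fib_mono) (use k5 in simp)
    moreover have "k = Suc (Suc (k - 2))" using k5 by simp
    then have "fib k = fib (k-1) + fib (k-2)" by (metis diff_Suc_1 diff_Suc_Suc fib.simps(3))
    ultimately have "3*a \<le> s - t" unfolding defs using L F AB by simp
    then have st3I: "3 * int a \<le> int s - int t" using ts by linarith
    have "3 * int a * (int b - int a) \<le> int s * (int b - int a)" using s3 ba by (intro mult_right_mono) simp_all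
    moreover have "3 * int a * int a \<le> (int s - int t) * int a" using st3I by (intro mult_right_mono) simp_all
    ultimately have "3 * (int a * int b) \<le> int c" using cI by (simp add: algebra_simps)
    then show ?thesis by (metis of_nat_le_iff of_nat_mult of_nat_numeral)
  qed
  have "p_frobenius 2 [a, b, c] = int ((3*a - 1)*b) - int a"
    by (rule p_frobenius_2_large_c[OF a1 ba rel cop sa c2 alt])
  then show ?thesis using a1 unfolding defs by (simp add: of_nat_diff)
qed

lemma p_frobenius_2_lucas_2i3:
  assumes hi: "i \<ge> 3"
  shows "p_frobenius 2 [lucas i, lucas (i+2), lucas (2*i+3)]
    = (int (lucas i) - 1) * int (lucas (i+2)) + int (lucas (2*i+3)) - int (lucas i)"
proof -
  obtain A B where AB: "A \<le> B" "1 \<le> B" "B \<le> 2*A + 1"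
    and L: "lucas i = 3*A + 4*B" "lucas (i+2) = 7*A + 11*B"
    and F: "fib (i-3) = A" "fib (i-2) = B" "fib (i-1) = A + B" "fib i = A + 2*B" "fib (i+1) = 2*A + 3*B"
    "fib (i+2) = 3*A + 5*B" "fib (i+3) = 5*A + 8*B" "fib (i+4) = 8*A + 13*B" "fib (i+5) = 13*A + 21*B"
    and i3: "i = 3 \<longleftrightarrow> A = 0"
    by (rule lucas_fib_near[OF hi])
  define a b c where "a = lucas i" and "b = lucas (i+2)" and "c = lucas (2*i+3)"
  have cop: "coprime a b" unfolding a_def b_def by (rule coprime_lucas_add2)
  have idx: "i + (i + 1) + 2 = 2*i + 3" "i + 1 + 2 = i + 3" by simp_all
  have rel: "c + fib (i+1) * a = fib (i+3) * b"
    using lucas_add_fib[of i "i + 1"] unfolding a_def b_def c_def idx .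
  have "p_frobenius 2 [a, b, c] = int ((a - 1)*b + c) - int a"
    by (rule p_frobenius_2_s_below_2a[where e="fib (i-3)", OF _ _ _ _ _ rel cop])
      (use L F AB in \<open>simp_all add: a_def b_def\<close>)
  moreover have "a \<ge> 1" unfolding a_def using L AB by simp
  ultimately show ?thesis unfolding a_def b_def c_def by (simp add: of_nat_diff)
qed

text \<open>Cassini's identity decides the sign of b e - t a, hence which of the two values applies.\<close>
lemma p_frobenius_2_lucas_2i2:
  assumes hi: "i \<ge> 3"
  shows "odd i \<Longrightarrow> p_frobenius 2 [lucas i, lucas (i+2), lucas (2*i+2)]
      = (int (lucas i) - 1) * int (lucas (i+2)) + int (lucas (2*i+2)) - int (lucas i)"
    and "even i \<Longrightarrow> p_frobenius 2 [lucas i, lucas (i+2), lucas (2*i+2)]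
      = (2 * int (lucas i) - 1) * int (lucas (i+2)) - int (lucas i)"
proof -
  obtain A B where AB: "A \<le> B" "1 \<le> B" "B \<le> 2*A + 1"
    and L: "lucas i = 3*A + 4*B" "lucas (i+2) = 7*A + 11*B"
    and F: "fib (i-3) = A" "fib (i-2) = B" "fib (i-1) = A + B" "fib i = A + 2*B" "fib (i+1) = 2*A + 3*B"
    "fib (i+2) = 3*A + 5*B" "fib (i+3) = 5*A + 8*B" "fib (i+4) = 8*A + 13*B" "fib (i+5) = 13*A + 21*B"
    and i3: "i = 3 \<longleftrightarrow> A = 0"
    by (rule lucas_fib_near[OF hi])
  obtain j where ij: "i = j + 3" using hi by (metis add.commute le_Suc_ex)
  have "A = fib j" "B = fib (j+1)" using F(1,2) ij by simp_all
  then have cas: "int B ^ 2 - int B * int A - int A ^ 2 = (-1)^j" using fib_Cassini_int' by simp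
  define a b c s t e where "a = lucas i" and "b = lucas (i+2)" and "c = lucas (2*i+2)"
    and "s = fib (i+2)" and "t = fib i" and "e = fib (i-2)"
  note defs = a_def b_def c_def s_def t_def e_def
  have idx: "i + i + 2 = 2*i + 2" by simp
  have rel: "c + t * a = s * b" using lucas_add_fib[of i i] unfolding defs idx .
  have cop: "coprime a b" unfolding defs by (rule coprime_lucas_add2)
  have vals: "a = 3*A + 4*B" "b = 7*A + 11*B" "s = 3*A + 5*B" "t = A + 2*B" "e = B"
    unfolding defs using L F by simp_all
  have se: "s = a + e" and e1: "e \<ge> 1" and ea: "e < a" and bt: "2*t \<le> b" and ba: "a \<le> b"
    and t1: "t \<ge> 1" and a1: "a \<ge> 1"
    using vals AB by simp_all
  have s3: "3*(t*a) \<le> s*b" unfolding vals by (simp add: algebra_simps)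
  have diff: "int b * int e - int t * int a = 3 * (-1)^j"
    unfolding vals using cas by (simp add: algebra_simps power2_eq_square)
  show "p_frobenius 2 [lucas i, lucas (i+2), lucas (2*i+2)]
      = (int (lucas i) - 1) * int (lucas (i+2)) + int (lucas (2*i+2)) - int (lucas i)" if "odd i"
  proof -
    have "int b * int e - int t * int a = 3" using diff that ij by simp
    then have "t*a < b*e" by (metis of_nat_less_iff of_nat_mult diff_gt_0_iff_gt zero_less_numeral)
    then have "p_frobenius 2 [a, b, c] = int ((a - 1)*b + c) - int a"
      by (rule p_frobenius_2_s_above_a_lt[OF se e1 ea bt ba rel cop t1 s3])
    then show ?thesis using a1 unfolding defs by (simp add: of_nat_diff)
  qed
  show "p_frobenius 2 [lucas i, lucas (i+2), lucas (2*i+2)]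
      = (2 * int (lucas i) - 1) * int (lucas (i+2)) - int (lucas i)" if "even i"
  proof -
    have "int b * int e - int t * int a = -3" using diff that ij by simp
    then have "b*e < t*a" by (metis of_nat_less_iff of_nat_mult diff_less_0_iff_less neg_less_0_iff_less
        zero_less_numeral)
    then have "p_frobenius 2 [a, b, c] = int ((2*a - 1)*b) - int a"
      by (rule p_frobenius_2_s_above_a_gt[OF se ea ba rel cop t1 s3])
    then show ?thesis using a1 unfolding defs by (simp add: of_nat_diff)
  qed
qed

lemma p_frobenius_2_lucas_2i1:
  assumes hi: "i \<ge> 3"
  shows "p_frobenius 2 [lucas i, lucas (i+2), lucas (2*i+1)]
    = (2 * int (fib (i-1)) - 1) * int (lucas (i+2)) + 2 * int (lucas (2*i+1)) - int (lucas i)"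
proof -
  obtain A B where AB: "A \<le> B" "1 \<le> B" "B \<le> 2*A + 1"
    and L: "lucas i = 3*A + 4*B" "lucas (i+2) = 7*A + 11*B"
    and F: "fib (i-3) = A" "fib (i-2) = B" "fib (i-1) = A + B" "fib i = A + 2*B" "fib (i+1) = 2*A + 3*B"
    "fib (i+2) = 3*A + 5*B" "fib (i+3) = 5*A + 8*B" "fib (i+4) = 8*A + 13*B" "fib (i+5) = 13*A + 21*B"
    and i3: "i = 3 \<longleftrightarrow> A = 0"
    by (rule lucas_fib_near[OF hi])
  define a b c s t where "a = lucas i" and "b = lucas (i+2)" and "c = lucas (2*i+1)"
    and "s = fib (i+1)" and "t = fib (i-1)"
  note defs = a_def b_def c_def s_def t_def
  have cop: "coprime a b" unfolding defs by (rule coprime_lucas_add2)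
  have idx: "i + (i - 1) + 2 = 2*i + 1" "i - 1 + 2 = i + 1" using hi by simp_all
  have rel: "c + t * a = s * b" using lucas_add_fib[of i "i - 1"] unfolding defs idx .
  have vals: "a = 3*A + 4*B" "b = 7*A + 11*B" "s = 2*A + 3*B" "t = A + B"
    unfolding defs using L F by simp_all
  have "p_frobenius 2 [a, b, c] = int ((2*t - 1)*b + 2*c) - int a"
    by (rule p_frobenius_2_a_eq_s_add_t[OF _ _ _ _ rel cop]) (use vals AB in simp_all)
  moreover have "t \<ge> 1" using vals AB by simp
  ultimately show ?thesis unfolding defs by (simp add: of_nat_diff)
qed

lemma p_frobenius_2_lucas_3_5_6: "p_frobenius 2 [lucas 3, lucas 5, lucas 6] = 61"
proof -
  have v: "lucas 3 = 4" "lucas 5 = 11" "lucas 6 = 18" by (simp_all add: numeral_eq_Suc)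
  have "coprime (lucas 3) (lucas (3 + 2))" by (rule coprime_lucas_add2)
  then have cop: "coprime (4::nat) 11" by (simp add: v)
  have "p_frobenius 2 [4, 11, 18] = int 65 - int 4"
  proof (rule p_frobenius_2_eqI[where s=2 and t=1 and ?\<rho>0.0=3 and J=1 and Z=3 and P="(3, 0)" and Q="(1, 1)"])
    fix \<rho> :: nat assume "\<rho> < 4"
    then consider "\<rho> = 0" | "\<rho> = 1" | "\<rho> = 2" | "\<rho> = 3" by linarith
    then show "3 \<le> card (class_pairs 4 11 18 2 65 \<rho>)"
    proof cases
      case 1 then show ?thesis
        by (intro three_le_card_class_pairs[where ya=0 and za=0 and yb=4 and zb=0 and yc=0 and zc=2
            and ja=0 and jb=1 and jc=1]) simp_all
    next
      case 2 then show ?thesis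
        by (intro three_le_card_class_pairs[where ya=1 and za=0 and yb=3 and zb=1 and yc=1 and zc=2
            and ja=0 and jb=1 and jc=1]) simp_all
    next
      case 3 then show ?thesis
        by (intro three_le_card_class_pairs[where ya=2 and za=0 and yb=0 and zb=1 and yc=2 and zc=2
            and ja=0 and jb=0 and jc=1]) simp_all
    next
      case 4 then show ?thesis
        by (intro three_le_card_class_pairs[where ya=3 and za=0 and yb=1 and zb=1 and yc=1 and zc=3
            and ja=0 and jb=0 and jc=1]) simp_all
    qed
  next
    fix x y z j :: nat assume e: "4*x + 11*y + 18*z = 65 - 4" and m: "y + 2*z = 3 + 4*j"
    have "j = 0"
    proof (rule ccontr)
      assume "j \<noteq> 0"
      then have "7 \<le> y + 2*z" using m by simp
      then show False using e by linarith
    qed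
    then have yz: "y + 2*z = 3" using m by simp
    then consider "z = 0" | "z = 1" by linarith
    then show "(y, z) \<in> {(3, 0), (1, 1)}" using yz by cases simp_all
  qed (simp_all add: cop)
  then show ?thesis using v by simp
qed

lemma two_le_lucas_div_fib_iff:
  assumes hi: "i \<ge> 3" and hk: "k \<ge> 3"
  shows "2 \<le> (lucas i - 1) div fib k \<longleftrightarrow> k \<le> i \<and> (i, k) \<noteq> (3, 3)"
proof -
  obtain A B where AB: "A \<le> B" "1 \<le> B" "B \<le> 2*A + 1"
    and L: "lucas i = 3*A + 4*B" "lucas (i+2) = 7*A + 11*B"
    and F: "fib (i-3) = A" "fib (i-2) = B" "fib (i-1) = A + B" "fib i = A + 2*B" "fib (i+1) = 2*A + 3*B"
    "fib (i+2) = 3*A + 5*B" "fib (i+3) = 5*A + 8*B" "fib (i+4) = 8*A + 13*B" "fib (i+5) = 13*A + 21*B"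
    and i3: "i = 3 \<longleftrightarrow> A = 0"
    by (rule lucas_fib_near[OF hi])
  have "fib k \<ge> 1" using fib_neq_0_nat[of k] hk by simp
  then have "2 \<le> (lucas i - 1) div fib k \<longleftrightarrow> 2 * fib k \<le> lucas i - 1"
    by (simp add: less_eq_div_iff_mult_less_eq)
  also have "\<dots> \<longleftrightarrow> k \<le> i \<and> (i, k) \<noteq> (3, 3)"
  proof
    assume h: "2 * fib k \<le> lucas i - 1"
    have "k \<le> i"
    proof (rule ccontr)
      assume "\<not> k \<le> i"
      then have "fib (i+1) \<le> fib k" by (intro fib_mono) simp
      then show False using h F L AB by simp
    qed
    moreover have "(i, k) \<noteq> (3, 3)"
    proof
      assume "(i, k) = (3, 3)"
      then have "lucas i = 4" "fib k = 2" by (simp_all add: numeral_eq_Suc)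
      then show False using h by simp
    qed
    ultimately show "k \<le> i \<and> (i, k) \<noteq> (3, 3)" ..
  next
    assume h: "k \<le> i \<and> (i, k) \<noteq> (3, 3)"
    then have "A \<ge> 1" using i3 hk by auto
    moreover have "fib k \<le> fib i" using h by (intro fib_mono) simp
    ultimately show "2 * fib k \<le> lucas i - 1" using F L by simp
  qed
  finally show ?thesis .
qed

lemma p_frobenius_2_lucas_near:
  assumes hi: "i \<ge> 3" and hk: "k \<ge> 3" and r: "r = (lucas i - 1) div fib k" "2 \<le> r"
  defines "q \<equiv> lucas i - r * fib k"
  shows "fib (k-2) * lucas i \<le> q * lucas (i+2) \<Longrightarrow> p_frobenius 2 [lucas i, lucas (i+2), lucas (i+k)]
      = int ((q - 1) * lucas (i+2) + (r + 2) * lucas (i+k)) - int (lucas i)"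
    and "q * lucas (i+2) < fib (k-2) * lucas i \<Longrightarrow> p_frobenius 2 [lucas i, lucas (i+2), lucas (i+k)]
      = int ((fib k - 1) * lucas (i+2) + (r + 1) * lucas (i+k)) - int (lucas i)"
proof -
  obtain A B where AB: "A \<le> B" "1 \<le> B" "B \<le> 2*A + 1"
    and L: "lucas i = 3*A + 4*B" "lucas (i+2) = 7*A + 11*B"
    and F: "fib (i-3) = A" "fib (i-2) = B" "fib (i-1) = A + B" "fib i = A + 2*B" "fib (i+1) = 2*A + 3*B"
    "fib (i+2) = 3*A + 5*B" "fib (i+3) = 5*A + 8*B" "fib (i+4) = 8*A + 13*B" "fib (i+5) = 13*A + 21*B"
    and i3: "i = 3 \<longleftrightarrow> A = 0"
    by (rule lucas_fib_near[OF hi])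
  define a b c s t where "a = lucas i" and "b = lucas (i+2)" and "c = lucas (i+k)"
    and "s = fib k" and "t = fib (k-2)"
  note defs = a_def b_def c_def s_def t_def
  have s1: "s \<ge> 1" and t1: "t \<ge> 1"
    unfolding defs using fib_neq_0_nat[of k] fib_neq_0_nat[of "k - 2"] hk by simp_all
  have ki: "k \<le> i" using two_le_lucas_div_fib_iff[OF hi hk] r by simp
  have "r * s + (a - 1) mod s = a - 1" unfolding r(1) defs by (rule div_mult_mod_eq)
  moreover have "(a - 1) mod s < s" using s1 by simp
  ultimately have "r * s \<le> a - 1" and "a - 1 < (r + 1) * s" by (simp_all add: algebra_simps)
  moreover have "a \<ge> 1" unfolding a_def using L AB by simp
  ultimately have a: "a = r*s + q" and q: "1 \<le> q" "q \<le> s"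
    unfolding q_def defs[symmetric] by (simp_all add: algebra_simps)
  have rel: "c + t*a = s*b" unfolding defs by (rule lucas_add_fib') (use hk in simp)
  have cop: "coprime a b" unfolding defs by (rule coprime_lucas_add2)
  have ts: "t \<le> s" unfolding defs by (rule fib_mono) simp
  have "t \<le> B" unfolding t_def using F(2)[symmetric] ki by (simp add: fib_mono)
  then have ba: "3*t + a \<le> b" "2*a \<le> b" unfolding a_def b_def using L by simp_all
  have "(r + 3)*t*s = r*s*t + 3*t*s" by (simp add: algebra_simps)
  also have "\<dots> \<le> a*s + (b - a)*s"
    using a ts ba by (intro add_mono mult_le_mono) (simp_all add: mult_le_mono1)
  also have "\<dots> = b*s" using ba by (simp add: algebra_simps)
  finally have bt: "(r + 3)*t \<le> b" using s1 by simp
  have "t*(2*a) \<le> s*b" using ts ba(2) by (rule mult_le_mono)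
  then have sb: "2*(t*a) \<le> s*b" by (simp add: algebra_simps)
  show "fib (k-2) * lucas i \<le> q * lucas (i+2) \<Longrightarrow> p_frobenius 2 [lucas i, lucas (i+2), lucas (i+k)]
      = int ((q - 1) * lucas (i+2) + (r + 2) * lucas (i+k)) - int (lucas i)"
    using p_frobenius_2_rs_add_q_ge[OF a q r(2) rel cop bt sb t1] unfolding defs by (simp add: mult.commute)
  show "q * lucas (i+2) < fib (k-2) * lucas i \<Longrightarrow> p_frobenius 2 [lucas i, lucas (i+2), lucas (i+k)]
      = int ((fib k - 1) * lucas (i+2) + (r + 1) * lucas (i+k)) - int (lucas i)"
    using p_frobenius_2_rs_add_q_lt[OF a q r(2) rel cop bt sb t1] unfolding defs by (simp add: mult.commute)
qed

lemma p_frobenius_2_lucas_near_int: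
  assumes hi: "i \<ge> 3" and hk: "k \<ge> 3"
  shows "let r = (int (lucas i) - 1) div int (fib k) in
        (r \<ge> 2 \<longleftrightarrow> k \<le> i \<and> (i, k) \<noteq> (3, 3))
      \<and> (r \<ge> 2 \<longrightarrow>
          ((int (lucas i) - r * int (fib k)) * int (lucas (i+2)) \<ge> int (fib (k-2)) * int (lucas i) \<longrightarrow>
             p_frobenius 2 [lucas i, lucas (i+2), lucas (i+k)]
               = (int (lucas i) - r * int (fib k) - 1) * int (lucas (i+2)) + (r + 2) * int (lucas (i+k))
                 - int (lucas i))
        \<and> ((int (lucas i) - r * int (fib k)) * int (lucas (i+2)) < int (fib (k-2)) * int (lucas i) \<longrightarrow>
             p_frobenius 2 [lucas i, lucas (i+2), lucas (i+k)]
               = (int (fib k) - 1) * int (lucas (i+2)) + (r + 1) * int (lucas (i+k)) - int (lucas i)))"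
proof -
  define r where "r = (lucas i - 1) div fib k"
  define q where "q = lucas i - r * fib k"
  have "lucas i \<ge> 1" using lucas_pos[of i] by simp
  then have rI: "(int (lucas i) - 1) div int (fib k) = int r" unfolding r_def by (simp add: zdiv_int of_nat_diff)
  have "r * fib k \<le> lucas i - 1" unfolding r_def by (rule div_times_less_eq_dividend)
  then have q1: "1 \<le> q" and qI: "int (lucas i) - int r * int (fib k) = int q"
    using \<open>lucas i \<ge> 1\<close> unfolding q_def by (simp_all add: of_nat_diff)
  have fk: "1 \<le> fib k" using fib_neq_0_nat[of k] hk by simp
  have E1: "int ((q - 1) * X + (r + 2) * Y) = (int q - 1) * int X + (int r + 2) * int Y" for X Y
    unfolding of_nat_add of_nat_mult of_nat_diff[OF q1] by simp
  have E2: "int ((fib k - 1) * X + (r + 1) * Y) = (int (fib k) - 1) * int X + (int r + 1) * int Y" for X Y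
    unfolding of_nat_add of_nat_mult of_nat_diff[OF fk] by simp
  show ?thesis unfolding Let_def rI qI
  proof (intro conjI impI)
    show "2 \<le> int r \<longleftrightarrow> k \<le> i \<and> (i, k) \<noteq> (3, 3)"
      using two_le_lucas_div_fib_iff[OF hi hk] unfolding r_def by simp
  next
    assume "2 \<le> int r" and "int (fib (k-2)) * int (lucas i) \<le> int q * int (lucas (i+2))"
    then have "2 \<le> r" "fib (k-2) * lucas i \<le> q * lucas (i+2)" by (simp_all only: of_nat_le_iff flip: of_nat_mult)
    then show "p_frobenius 2 [lucas i, lucas (i+2), lucas (i+k)]
      = (int q - 1) * int (lucas (i+2)) + (int r + 2) * int (lucas (i+k)) - int (lucas i)"
      using p_frobenius_2_lucas_near(1)[OF hi hk r_def] unfolding q_def[symmetric] E1 by blast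
  next
    assume "2 \<le> int r" and "int q * int (lucas (i+2)) < int (fib (k-2)) * int (lucas i)"
    then have "2 \<le> r" "q * lucas (i+2) < fib (k-2) * lucas i" by (simp_all only: of_nat_less_iff flip: of_nat_mult)
    then show "p_frobenius 2 [lucas i, lucas (i+2), lucas (i+k)]
      = (int (fib k) - 1) * int (lucas (i+2)) + (int r + 1) * int (lucas (i+k)) - int (lucas i)"
      using p_frobenius_2_lucas_near(2)[OF hi hk r_def] unfolding q_def[symmetric] E2 by blast
  qed
qed

theorem theorem7:
  fixes i k :: nat
  assumes hi: "i \<ge> 3" and hk: "k \<ge> 3"
  defines "L \<equiv> \<lambda>n. int (lucas n)" and "F \<equiv> \<lambda>n. int (fib n)"
  shows
    "(k \<ge> i + 4 \<longrightarrow>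
        p_frobenius 2 [lucas i, lucas (i+2), lucas (i+k)] = (3 * L i - 1) * L (i+2) - L i)
   \<and> p_frobenius 2 [lucas i, lucas (i+2), lucas (2*i+3)] = (L i - 1) * L (i+2) + L (2*i+3) - L i
   \<and> (odd i \<longrightarrow>
        p_frobenius 2 [lucas i, lucas (i+2), lucas (2*i+2)] = (L i - 1) * L (i+2) + L (2*i+2) - L i)
   \<and> (even i \<longrightarrow>
        p_frobenius 2 [lucas i, lucas (i+2), lucas (2*i+2)] = (2 * L i - 1) * L (i+2) - L i)
   \<and> p_frobenius 2 [lucas i, lucas (i+2), lucas (2*i+1)]
        = (2 * F (i-1) - 1) * L (i+2) + 2 * L (2*i+1) - L i
   \<and> p_frobenius 2 [lucas 3, lucas 5, lucas 6] = L 5 + 3 * L 6 - L 3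
   \<and> L 5 + 3 * L 6 - L 3 = 61
   \<and> (let r = (L i - 1) div F k in
        (r \<ge> 2 \<longleftrightarrow> k \<le> i \<and> (i, k) \<noteq> (3, 3))
      \<and> (r \<ge> 2 \<longrightarrow>
          ((L i - r * F k) * L (i+2) \<ge> F (k-2) * L i \<longrightarrow>
             p_frobenius 2 [lucas i, lucas (i+2), lucas (i+k)]
               = (L i - r * F k - 1) * L (i+2) + (r + 2) * L (i+k) - L i)
        \<and> ((L i - r * F k) * L (i+2) < F (k-2) * L i \<longrightarrow>
             p_frobenius 2 [lucas i, lucas (i+2), lucas (i+k)]
               = (F k - 1) * L (i+2) + (r + 1) * L (i+k) - L i)))"
proof -
  have "L 5 + 3 * L 6 - L 3 = 61" unfolding L_def by (simp add: numeral_eq_Suc)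
  then show ?thesis unfolding L_def F_def
    using p_frobenius_2_lucas_far[OF hi] p_frobenius_2_lucas_2i3[OF hi] p_frobenius_2_lucas_2i2[OF hi]
      p_frobenius_2_lucas_2i1[OF hi] p_frobenius_2_lucas_3_5_6 p_frobenius_2_lucas_near_int[OF hi hk]
    by simp
qed

end
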